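(* Let $(x(t),v(t))$ be the trajectory of an optimal control of $\mathcal Q_N(0,T,x_0,v_0)$. Then for all $0\le t_1\le t_2\le T$, $$\|v(t_2)-\bar v\|_N^2\le C_\lambda\|v(t_1)-\bar v\|_N^2,\qquad C_\lambda=\begin{cases}1+\lambda^{-1/2},&\lambda\le1,\\ 1+\lambda^{1/2},&\lambda>1.\end{cases}$$
   Context: Fix integers $D\ge1$, $N\ge1$, a horizon $T>0$, a weight $\lambda>0$ and a target velocity $\bar v\in\mathbb R^D$. The interaction kernel $\Psi:\mathbb R^D\times\mathbb R^D\to\mathbb R$ is Lipschitz continuous, symmetric ($\Psi(x,y)=\Psi(y,x)$), nonnegative and bounded ($0\le\Psi\le C_\Psi$). The admissible control set $\mathcal F$ consists of Carathéodory functions $f:[0,T]\times\mathbb R^{2D}\to\mathbb R^D$ with $f(t,\cdot)\in W^{1,\infty}_{loc}(\mathbb R^{2D})$ and $|f(t,0)|+\|f(t,\cdot)\|_{Lip}\le C_B$ for a.e. $t$, where the constant $C_B$ is assumed large enough ($C_B\ge\lambda^{-1/2}(1+|\bar v|)$) that the linear feedback $(x,v)\mapsto-\lambda^{-1/2}(v-\bar v)$ is admissible; admissible controls on a subinterval $[a,T]$ are defined analogously. Given $f\in\mathcal F$ and initial data $x_0=(x_{10},\dots,x_{N0})$, $v_0=(v_{10},\dots,v_{N0})\in(\mathbb R^D)^N$, the state $x(t)=(x_i(t))_{i=1}^N$, $v(t)=(v_i(t))_{i=1}^N$ solves $\dot x_i=v_i$, $\dot v_i=\frac1N\sum_{j=1}^N\Psi(x_i,x_j)(v_j-v_i)+f_i(t)$,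 with $f_i(t):=f(t,x_i(t),v_i(t))$, $x_i(0)=x_{i0}$, $v_i(0)=v_{i0}$. For $w=(w_1,\dots,w_N)\in(\mathbb R^D)^N$ set $\|w\|_N^2=\frac1N\sum_{i=1}^N|w_i|^2$, and write $\|v-\bar v\|_N^2=\frac1N\sum_i|v_i-\bar v|^2$, $f(t)=(f_1(t),\dots,f_N(t))$. The problem $\mathcal Q_N(0,T,x_0,v_0)$ is to minimize $J_N(f)=\int_0^T\|v(t)-\bar v\|_N^2+\lambda\|f(t)\|_N^2\,dt$ over $f\in\mathcal F$; a minimizer is an optimal control and its trajectory the optimal solution. The problem $\mathcal Q_N(a,T,x(a),v(a))$ on $[a,T]$ with data at time $a$ is defined analogously. *)

theory Defs
  imports "HOL-Analysis.Analysis"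
begin

text \<open>Agents are indexed by i < N; states x, v : real => nat => 'a, where
  'a :: euclidean_space plays the role of R^D. Controls are functions
  f : real => ('a * 'a) => 'a (feedback laws on R^{2D}).\<close>

definition normN_sq :: "nat \<Rightarrow> (nat \<Rightarrow> 'a::real_normed_vector) \<Rightarrow> real" where
  "normN_sq N w = (1 / real N) * (\<Sum>i<N. (norm (w i))\<^sup>2)"

text \<open>Admissible controls on [a,T]: Caratheodory (measurable in t, Lipschitz hence
  continuous and W^{1,inf}_loc in the state for a.e. t), with |f(t,0)| + Lip(f(t,.)) <= C_B a.e.\<close>
definition admissible ::
  "real \<Rightarrow> real \<Rightarrow> real \<Rightarrow> (real \<Rightarrow> ('a::euclidean_space \<times> 'a) \<Rightarrow> 'a) \<Rightarrow> bool" where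
  "admissible CB a T f \<longleftrightarrow>
     (\<forall>z. (\<lambda>t. f t z) \<in> borel_measurable (lebesgue_on {a..T})) \<and>
     (AE t in lebesgue_on {a..T}. \<exists>L. L-lipschitz_on UNIV (f t) \<and> norm (f t 0) + L \<le> CB)"

definition cs_rhs ::
  "('a::euclidean_space \<Rightarrow> 'a \<Rightarrow> real) \<Rightarrow> nat \<Rightarrow> (real \<Rightarrow> ('a \<times> 'a) \<Rightarrow> 'a)
   \<Rightarrow> (real \<Rightarrow> nat \<Rightarrow> 'a) \<Rightarrow> (real \<Rightarrow> nat \<Rightarrow> 'a) \<Rightarrow> nat \<Rightarrow> real \<Rightarrow> 'a" where
  "cs_rhs \<Psi> N f x v i s =
     (1 / real N) *\<^sub>R (\<Sum>j<N. \<Psi> (x s i) (x s j) *\<^sub>R (v s j - v s i)) + f s (x s i, v s i)"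

definition is_traj ::
  "('a::euclidean_space \<Rightarrow> 'a \<Rightarrow> real) \<Rightarrow> nat \<Rightarrow> real \<Rightarrow> real \<Rightarrow> (real \<Rightarrow> ('a \<times> 'a) \<Rightarrow> 'a)
   \<Rightarrow> (nat \<Rightarrow> 'a) \<Rightarrow> (nat \<Rightarrow> 'a) \<Rightarrow> (real \<Rightarrow> nat \<Rightarrow> 'a) \<Rightarrow> (real \<Rightarrow> nat \<Rightarrow> 'a) \<Rightarrow> bool" where
  "is_traj \<Psi> N a T f xa va x v \<longleftrightarrow>
     (\<forall>t\<in>{a..T}. \<forall>i<N.
        ((\<lambda>s. v s i) has_integral (x t i - xa i)) {a..t} \<and>
        ((\<lambda>s. cs_rhs \<Psi> N f x v i s) has_integral (v t i - va i)) {a..t})"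

definition cost ::
  "nat \<Rightarrow> real \<Rightarrow> real \<Rightarrow> real \<Rightarrow> 'a::euclidean_space \<Rightarrow> (real \<Rightarrow> ('a \<times> 'a) \<Rightarrow> 'a)
   \<Rightarrow> (real \<Rightarrow> nat \<Rightarrow> 'a) \<Rightarrow> (real \<Rightarrow> nat \<Rightarrow> 'a) \<Rightarrow> real" where
  "cost N lam a T vbar f x v =
     integral {a..T} (\<lambda>t. normN_sq N (\<lambda>i. v t i - vbar)
                          + lam * normN_sq N (\<lambda>i. f t (x t i, v t i)))"

definition optimal ::
  "('a::euclidean_space \<Rightarrow> 'a \<Rightarrow> real) \<Rightarrow> nat \<Rightarrow> real \<Rightarrow> real \<Rightarrow> real \<Rightarrow> 'a \<Rightarrow> real
   \<Rightarrow> (nat \<Rightarrow> 'a) \<Rightarrow> (nat \<Rightarrow> 'a) \<Rightarrow> (real \<Rightarrow> ('a \<times> 'a) \<Rightarrow> 'a)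
   \<Rightarrow> (real \<Rightarrow> nat \<Rightarrow> 'a) \<Rightarrow> (real \<Rightarrow> nat \<Rightarrow> 'a) \<Rightarrow> bool" where
  "optimal \<Psi> N lam a T vbar CB xa va f x v \<longleftrightarrow>
     admissible CB a T f \<and> is_traj \<Psi> N a T f xa va x v \<and>
     (\<forall>g y w. admissible CB a T g \<longrightarrow> is_traj \<Psi> N a T g xa va y w \<longrightarrow>
        cost N lam a T vbar f x v \<le> cost N lam a T vbar g y w)"

end

(*
  Let e(t) = ||v(t) - vbar||_N^2. Along any admissible trajectory,
  e' = (2/N) sum_i <v_i - vbar, c_i + f_i>, where c_i is the consensus term; by the symmetry of Psi
  the consensus part is nonpositive, and Young's inequality bounds the control part, so
  e(t2) - e(t1) <= lam^(-1/2) times the cost of f on [t1, t2]. By optimality, the cost of f on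
  [t1, T] is at most that of switching at t1 to the feedback -lam^(-1/2) (v - vbar). Along that
  feedback the running cost is 2 e and e' <= -2 lam^(-1/2) e, so its cost is at most
  lam^(1/2) e(t1). Together, e(t2) <= 2 e(t1), and 2 is at most the constant C_lambda of the
  statement.
*)

theory Submission
  imports Defs
begin

section \<open>Integrals over intervals\<close>

lemma continuous_on_has_integral_primitive:
  fixes V h :: "real \<Rightarrow> 'b::banach"
  assumes "\<And>t. t \<in> {a..b} \<Longrightarrow> (h has_integral (V t - c)) {a..t}"
  shows "continuous_on {a..b} V"
proof (cases "a \<le> b")
  case True
  then have "h integrable_on {a..b}"
    using assms[of b] by auto
  then have "continuous_on {a..b} (\<lambda>t. c + integral {a..t} h)"
    by (intro continuous_intros indefinite_integral_continuous_1)
  moreover have "c + integral {a..t} h = V t" if "t \<in> {a..b}" for t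
    using integral_unique[OF assms[OF that]] by simp
  ultimately show ?thesis
    by (rule continuous_on_eq)
qed simp

lemma has_integral_Icc_subinterval_diff:
  fixes h :: "real \<Rightarrow> 'b::banach"
  assumes "(h has_integral A) {a..t}" and "(h has_integral B) {a..u}" and "a \<le> u" and "u \<le> t"
  shows "(h has_integral (A - B)) {u..t}"
proof -
  have "h integrable_on {u..t}"
    using assms by (meson atLeastatMost_subset_iff has_integral_integrable integrable_on_subinterval order_refl)
  moreover have "integral {a..u} h + integral {u..t} h = integral {a..t} h"
    using assms by (intro Henstock_Kurzweil_Integration.integral_combine) blast+
  ultimately show ?thesis
    using integral_unique[OF assms(1)] integral_unique[OF assms(2)]
    by (simp add: has_integral_integrable_integral algebra_simps)
qed

lemma has_integral_primitive_initial:
  fixes V :: "real \<Rightarrow> 'b::real_normed_vector"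
  assumes "(h has_integral (V a - c)) {a..a}"
  shows "V a = c"
proof -
  have "(h has_integral 0) {a..a}"
    using has_integral_refl(2)[of h a] by simp
  then have "V a - c = 0"
    by (rule has_integral_unique[OF assms])
  then show ?thesis
    by simp
qed

lemma abs_diff_le_of_dominated_increments:
  fixes D m :: "real \<Rightarrow> real"
  assumes "a \<le> b" and m: "m integrable_on {a..b}" and "d > 0"
    and d: "\<And>u w. a \<le> u \<Longrightarrow> u \<le> w \<Longrightarrow> w \<le> b \<Longrightarrow> w - u < d \<Longrightarrow> \<bar>D w - D u\<bar> \<le> e * integral {u..w} m"
  shows "\<bar>D b - D a\<bar> \<le> e * integral {a..b} m"
proof -
  have "gauge (\<lambda>x. ball x (d / 2))"
    using \<open>d > 0\<close> by (simp add: gauge_def)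
  then obtain p where p: "p tagged_division_of {a..b}" and fine: "(\<lambda>x. ball x (d / 2)) fine p"
    using fine_division_exists_real by blast
  have piece: "\<bar>D (Sup K) - D (Inf K)\<bar> \<le> e * integral K m" if xK: "(x, K) \<in> p" for x K
  proof -
    obtain u w where K: "K = {u..w}"
      using tagged_division_ofD(4)[OF p xK] by (metis box_real(2))
    have "x \<in> K" "K \<subseteq> {a..b}" "K \<subseteq> ball x (d / 2)"
      using tagged_division_ofD(2,3)[OF p xK] fine xK by (auto simp: fine_def)
    then have "u \<le> w"
      using K by simp
    then have "u \<in> K" "w \<in> K"
      using K by auto
    then have "a \<le> u" "w \<le> b" "dist x u < d / 2" "dist x w < d / 2"
      using \<open>K \<subseteq> {a..b}\<close> \<open>K \<subseteq> ball x (d / 2)\<close> by auto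
    then have "w - u < d"
      unfolding dist_real_def abs_less_iff by linarith
    then show ?thesis
      using d[OF \<open>a \<le> u\<close> \<open>u \<le> w\<close> \<open>w \<le> b\<close>] K \<open>u \<le> w\<close> by simp
  qed
  have "\<bar>D b - D a\<bar> = \<bar>\<Sum>(x, K)\<in>p. D (Sup K) - D (Inf K)\<bar>"
    using additive_tagged_division_1[OF \<open>a \<le> b\<close> p, of D] by simp
  also have "\<dots> \<le> (\<Sum>(x, K)\<in>p. \<bar>D (Sup K) - D (Inf K)\<bar>)"
    by (rule sum_abs[THEN order_trans]) (simp add: case_prod_unfold)
  also have "\<dots> \<le> (\<Sum>(x, K)\<in>p. e * integral K m)"
    by (rule sum_mono) (use piece in auto)
  also have "\<dots> = e * integral {a..b} m"
    using integral_combine_tagged_division_topdown[of m a b p] m p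
    by (simp add: sum_distrib_left case_prod_unfold)
  finally show ?thesis .
qed

lemma locally_dominated_increments_imp_eq:
  fixes D m :: "real \<Rightarrow> real"
  assumes "a \<le> b" and m: "m integrable_on {a..b}"
    and small: "\<And>e. e > 0 \<Longrightarrow> \<exists>d>0. \<forall>u w. a \<le> u \<longrightarrow> u \<le> w \<longrightarrow> w \<le> b \<longrightarrow> w - u < d
                  \<longrightarrow> \<bar>D w - D u\<bar> \<le> e * integral {u..w} m"
  shows "D b = D a"
proof -
  have bound: "\<bar>D b - D a\<bar> \<le> e * integral {a..b} m" if "e > 0" for e
    using small[OF that] abs_diff_le_of_dominated_increments[OF \<open>a \<le> b\<close> m] by blast
  have "\<bar>D b - D a\<bar> \<le> e" if "e > 0" for e
  proof -
    have "0 \<le> integral {a..b} m"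
      using bound[of 1] by simp
    have "\<bar>D b - D a\<bar> \<le> e / (integral {a..b} m + 1) * integral {a..b} m"
      by (rule bound) (use that \<open>0 \<le> integral {a..b} m\<close> in simp)
    also have "\<dots> \<le> e"
      using \<open>0 \<le> integral {a..b} m\<close> that by (simp add: field_simps)
    finally show ?thesis .
  qed
  then have "\<bar>D b - D a\<bar> \<le> 0"
    by (rule field_le_epsilon) simp
  then show ?thesis
    by simp
qed

lemma absolutely_integrable_inner_continuous:
  fixes V h :: "real \<Rightarrow> 'b::euclidean_space"
  assumes "continuous_on {a..b} V" and "h absolutely_integrable_on {a..b}"
  shows "(\<lambda>s. inner (V s) (h s)) absolutely_integrable_on {a..b}"
proof -
  have "bilinear (inner :: 'b \<Rightarrow> 'b \<Rightarrow> real)"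
    by (simp add: bilinear_conv_bounded_bilinear bounded_bilinear_inner)
  moreover have "V \<in> borel_measurable (lebesgue_on {a..b})"
    using assms(1) by (rule continuous_imp_measurable_on_sets_lebesgue) simp
  moreover have "bounded (V ` {a..b})"
    using assms(1) by (intro compact_imp_bounded compact_continuous_image) auto
  ultimately show ?thesis
    using absolutely_integrable_bounded_measurable_product[OF _ _ _ _ assms(2)] by simp
qed

lemma has_integral_inner_increment:
  fixes V h :: "real \<Rightarrow> 'b::euclidean_space"
  assumes "(h has_integral (V w - V u)) {u..w}" and "(\<lambda>s. 2 * inner (V s) (h s)) integrable_on {u..w}"
  shows "((\<lambda>s. inner (V w + V u - 2 *\<^sub>R V s) (h s)) has_integral
           (norm (V w))\<^sup>2 - (norm (V u))\<^sup>2 - integral {u..w} (\<lambda>s. 2 * inner (V s) (h s))) {u..w}"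
proof -
  from has_integral_linear[OF assms(1) bounded_linear_inner_right[of "V w + V u"]]
  have "((\<lambda>s. inner (V w + V u) (h s)) has_integral (norm (V w))\<^sup>2 - (norm (V u))\<^sup>2) {u..w}"
    by (simp add: o_def power2_norm_eq_inner inner_add inner_diff inner_commute)
  from has_integral_diff[OF this integrable_integral[OF assms(2)]]
  show ?thesis
    by (simp add: inner_diff_left)
qed

lemma norm_integral_inner_le:
  fixes g h :: "real \<Rightarrow> 'b::euclidean_space"
  assumes "(\<lambda>s. inner (g s) (h s)) integrable_on S" and "(\<lambda>s. norm (h s)) integrable_on S"
    and "\<And>s. s \<in> S \<Longrightarrow> norm (g s) \<le> e"
  shows "\<bar>integral S (\<lambda>s. inner (g s) (h s))\<bar> \<le> e * integral S (\<lambda>s. norm (h s))"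
proof -
  have "norm (inner (g s) (h s)) \<le> e * norm (h s)" if "s \<in> S" for s
  proof -
    have "norm (inner (g s) (h s)) \<le> norm (g s) * norm (h s)"
      by (simp add: Cauchy_Schwarz_ineq2)
    also have "\<dots> \<le> e * norm (h s)"
      using assms(3)[OF that] by (rule mult_right_mono) simp
    finally show ?thesis .
  qed
  then have "norm (integral S (\<lambda>s. inner (g s) (h s))) \<le> integral S (\<lambda>s. e * norm (h s))"
    using assms(1,2) by (intro integral_norm_bound_integral integrable_on_mult_right) auto
  then show ?thesis
    by simp
qed

text \<open>A chain rule for |V|^2 with V only absolutely continuous. The defect
  D t = |V t|^2 - int_a^t 2 <V s, h s> ds has increments int_u^w <V w + V u - 2 V s, h s> ds,
  which uniform continuity of V makes small against int_u^w |h| on short intervals.\<close>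
lemma has_integral_norm_power2_increment:
  fixes V h :: "real \<Rightarrow> 'b::euclidean_space"
  assumes "a \<le> b" and h: "h absolutely_integrable_on {a..b}"
    and V: "\<And>t. t \<in> {a..b} \<Longrightarrow> (h has_integral (V t - V a)) {a..t}"
  shows "((\<lambda>s. 2 * inner (V s) (h s)) has_integral ((norm (V b))\<^sup>2 - (norm (V a))\<^sup>2)) {a..b}"
proof -
  let ?q = "\<lambda>s. 2 * inner (V s) (h s)"
  have Vc: "continuous_on {a..b} V"
    using V by (rule continuous_on_has_integral_primitive)
  then have "?q integrable_on {a..b}"
    using absolutely_integrable_inner_continuous[OF _ h] by (simp add: absolutely_integrable_on_def)
  then have q: "?q integrable_on {u..w}" if "a \<le> u" "w \<le> b" for u w
    by (rule integrable_on_subinterval) (use that in auto)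
  have "(\<lambda>s. norm (h s)) integrable_on {a..b}"
    using h by (simp add: absolutely_integrable_on_def)
  then have hn: "(\<lambda>s. norm (h s)) integrable_on {u..w}" if "a \<le> u" "w \<le> b" for u w
    by (rule integrable_on_subinterval) (use that in auto)
  define D where "D t = (norm (V t))\<^sup>2 - integral {a..t} ?q" for t
  have increment: "((\<lambda>s. inner (V w + V u - 2 *\<^sub>R V s) (h s)) has_integral (D w - D u)) {u..w}"
    if "a \<le> u" "u \<le> w" "w \<le> b" for u w
  proof -
    have "(h has_integral (V w - V u)) {u..w}"
      using has_integral_Icc_subinterval_diff[OF V V] that by fastforce
    from has_integral_inner_increment[OF this q[OF that(1,3)]]
    have "((\<lambda>s. inner (V w + V u - 2 *\<^sub>R V s) (h s))
            has_integral (norm (V w))\<^sup>2 - (norm (V u))\<^sup>2 - integral {u..w} ?q) {u..w}" .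
    moreover have "integral {a..u} ?q + integral {u..w} ?q = integral {a..w} ?q"
      using that by (intro Henstock_Kurzweil_Integration.integral_combine q) auto
    then have "(norm (V w))\<^sup>2 - (norm (V u))\<^sup>2 - integral {u..w} ?q = D w - D u"
      unfolding D_def by linarith
    ultimately show ?thesis
      by simp
  qed
  have "D b = D a"
  proof (rule locally_dominated_increments_imp_eq[OF \<open>a \<le> b\<close> hn[OF order_refl order_refl]])
    fix e :: real assume "e > 0"
    have "uniformly_continuous_on {a..b} V"
      using Vc by (rule compact_uniformly_continuous) simp
    then obtain d where "d > 0"
      and d: "\<And>s s'. s \<in> {a..b} \<Longrightarrow> s' \<in> {a..b} \<Longrightarrow> dist s' s < d \<Longrightarrow> dist (V s') (V s) < e / 2"
      using \<open>e > 0\<close> unfolding uniformly_continuous_on_def by (meson half_gt_zero)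
    have "\<bar>D w - D u\<bar> \<le> e * integral {u..w} (\<lambda>s. norm (h s))"
      if "a \<le> u" "u \<le> w" "w \<le> b" "w - u < d" for u w
    proof -
      have "norm (V w + V u - 2 *\<^sub>R V s) \<le> e" if "s \<in> {u..w}" for s
      proof -
        have "V w + V u - 2 *\<^sub>R V s = (V w - V s) + (V u - V s)"
          by (simp add: scaleR_2 algebra_simps)
        then have "norm (V w + V u - 2 *\<^sub>R V s) \<le> dist (V w) (V s) + dist (V u) (V s)"
          by (metis dist_norm norm_triangle_ineq)
        moreover have "s \<in> {a..b}" "w \<in> {a..b}" "u \<in> {a..b}" "dist w s < d" "dist u s < d"
          using that \<open>a \<le> u\<close> \<open>u \<le> w\<close> \<open>w \<le> b\<close> \<open>w - u < d\<close> by (auto simp: dist_real_def)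
        ultimately show ?thesis
          using d[of s w] d[of s u] by linarith
      qed
      with has_integral_integrable[OF increment[OF that(1-3)]] hn[OF that(1,3)]
      have "\<bar>integral {u..w} (\<lambda>s. inner (V w + V u - 2 *\<^sub>R V s) (h s))\<bar>
              \<le> e * integral {u..w} (\<lambda>s. norm (h s))"
        by (rule norm_integral_inner_le)
      then show ?thesis
        using integral_unique[OF increment[OF that(1-3)]] by simp
    qed
    then show "\<exists>d>0. \<forall>u w. a \<le> u \<longrightarrow> u \<le> w \<longrightarrow> w \<le> b \<longrightarrow> w - u < d
                  \<longrightarrow> \<bar>D w - D u\<bar> \<le> e * integral {u..w} (\<lambda>s. norm (h s))"
      using \<open>d > 0\<close> by blast
  qed
  then show ?thesis
    using q[OF order_refl order_refl] by (simp add: D_def has_integral_integrable_integral)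
qed

lemma has_integral_power_div_fact:
  fixes a t :: real
  assumes "a \<le> t"
  shows "((\<lambda>s. (s - a) ^ k / fact k) has_integral (t - a) ^ Suc k / fact (Suc k)) {a..t}"
proof -
  have "((\<lambda>s. (s - a) ^ Suc k / fact (Suc k)) has_real_derivative (s - a) ^ k / fact k) (at s within {a..t})"
    for s
  proof -
    have "((\<lambda>s. s - a) has_real_derivative 1) (at s within {a..t})"
      by (auto intro!: derivative_eq_intros)
    from DERIV_cdivide[OF DERIV_power[OF this, of "Suc k"], of "fact (Suc k)"]
    have "((\<lambda>s. (s - a) ^ Suc k / fact (Suc k)) has_real_derivative
            real (Suc k) * (s - a) ^ k * 1 / fact (Suc k)) (at s within {a..t})"
      by simp
    moreover have "real (Suc k) * (s - a) ^ k * 1 / fact (Suc k) = (s - a) ^ k / fact k"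
      by (simp del: of_nat_Suc)
    ultimately show ?thesis
      by simp
  qed
  then show ?thesis
    using fundamental_theorem_of_calculus[OF assms, of "\<lambda>s. (s - a) ^ Suc k / fact (Suc k)"]
    by (simp add: has_real_derivative_iff_has_vector_derivative)
qed

lemma sum_norm_integral_le:
  fixes \<delta> :: "'i \<Rightarrow> real \<Rightarrow> 'b::banach"
  assumes "finite I" and "\<And>i. i \<in> I \<Longrightarrow> continuous_on {a..t} (\<delta> i)"
  shows "(\<Sum>i\<in>I. norm (integral {a..t} (\<delta> i))) \<le> integral {a..t} (\<lambda>s. \<Sum>i\<in>I. norm (\<delta> i s))"
proof -
  have "(\<Sum>i\<in>I. norm (integral {a..t} (\<delta> i))) \<le> (\<Sum>i\<in>I. integral {a..t} (\<lambda>s. norm (\<delta> i s)))"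
    using assms(2)
    by (intro sum_mono integral_norm_bound_integral integrable_continuous_real continuous_on_norm) auto
  also have "\<dots> = integral {a..t} (\<lambda>s. \<Sum>i\<in>I. norm (\<delta> i s))"
    using assms by (intro integral_sum[symmetric] integrable_continuous_real continuous_on_norm) auto
  finally show ?thesis .
qed

section \<open>Dissipation of the velocity energy\<close>

definition consensus ::
  "('a::real_vector \<Rightarrow> 'a \<Rightarrow> real) \<Rightarrow> nat \<Rightarrow> ('a \<Rightarrow> 'a) \<Rightarrow> (nat \<Rightarrow> 'a) \<Rightarrow> (nat \<Rightarrow> 'a) \<Rightarrow> nat \<Rightarrow> 'a"
  where "consensus \<Psi> N \<sigma> x v i = (1 / real N) *\<^sub>R (\<Sum>j<N. \<Psi> (x i) (x j) *\<^sub>R \<sigma> (v j - v i))"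

lemma cs_rhs_eq_consensus:
  "cs_rhs \<Psi> N f x v i s = consensus \<Psi> N (\<lambda>d. d) (x s) (v s) i + f s (x s i, v s i)"
  by (simp add: cs_rhs_def consensus_def)

text \<open>Exchanging i and j turns the double sum into minus one half of
  sum_i sum_j P i j * <U j - U i, \<sigma> (U j - U i)>.\<close>
lemma sum_interaction_inner_nonpos:
  fixes U :: "nat \<Rightarrow> 'b::real_inner" and P :: "nat \<Rightarrow> nat \<Rightarrow> real"
  assumes sym: "\<And>i j. P i j = P j i" and nonneg: "\<And>i j. 0 \<le> P i j"
    and odd: "\<And>d. \<sigma> (- d) = - \<sigma> d" and monotone: "\<And>d. 0 \<le> inner d (\<sigma> d)"
  shows "(\<Sum>i<N. \<Sum>j<N. P i j * inner (U i) (\<sigma> (U j - U i))) \<le> 0"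
proof -
  define S where "S = (\<Sum>i<N. \<Sum>j<N. P i j * inner (U i) (\<sigma> (U j - U i)))"
  have "S = (\<Sum>j<N. \<Sum>i<N. P i j * inner (U i) (\<sigma> (U j - U i)))"
    unfolding S_def by (rule sum.swap)
  also have "\<dots> = (\<Sum>i<N. \<Sum>j<N. - (P i j * inner (U j) (\<sigma> (U j - U i))))"
  proof (intro sum.cong refl)
    fix i j
    have "\<sigma> (U i - U j) = - \<sigma> (U j - U i)"
      using odd by (metis minus_diff_eq)
    then show "P j i * inner (U j) (\<sigma> (U i - U j)) = - (P i j * inner (U j) (\<sigma> (U j - U i)))"
      using sym[of i j] by simp
  qed
  finally have S2: "S = (\<Sum>i<N. \<Sum>j<N. - (P i j * inner (U j) (\<sigma> (U j - U i))))" .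
  have "S + S = (\<Sum>i<N. \<Sum>j<N. P i j * inner (U i) (\<sigma> (U j - U i)) - P i j * inner (U j) (\<sigma> (U j - U i)))"
    by (subst (2) S2) (simp add: S_def sum.distrib[symmetric])
  also have "\<dots> = (\<Sum>i<N. \<Sum>j<N. - (P i j * inner (U j - U i) (\<sigma> (U j - U i))))"
    by (intro sum.cong refl) (simp add: inner_diff_left algebra_simps)
  also have "\<dots> \<le> 0"
    using nonneg monotone by (intro sum_nonpos) (simp add: mult_nonneg_nonneg)
  finally show ?thesis
    unfolding S_def by simp
qed

lemma sum_inner_consensus_nonpos:
  fixes \<Psi> :: "'a::real_inner \<Rightarrow> 'a \<Rightarrow> real"
  assumes "\<And>y z. \<Psi> y z = \<Psi> z y" and "\<And>y z. 0 \<le> \<Psi> y z"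
    and "\<And>d. \<sigma> (- d) = - \<sigma> d" and "\<And>d. 0 \<le> inner d (\<sigma> d)"
  shows "(\<Sum>i<N. inner (v i - c) (consensus \<Psi> N \<sigma> x v i)) \<le> 0"
proof -
  have "(\<Sum>i<N. inner (v i - c) (consensus \<Psi> N \<sigma> x v i))
      = (1 / real N) * (\<Sum>i<N. \<Sum>j<N. \<Psi> (x i) (x j) * inner (v i - c) (\<sigma> ((v j - c) - (v i - c))))"
    by (simp add: consensus_def inner_sum_right sum_distrib_left)
  also have "\<dots> \<le> 0"
    using assms by (intro mult_nonneg_nonpos sum_interaction_inner_nonpos) auto
  finally show ?thesis .
qed

lemma two_inner_le_weighted_squares:
  fixes a b :: "'b::real_inner"
  assumes "c > 0"
  shows "2 * inner a b \<le> c * (norm a)\<^sup>2 + (norm b)\<^sup>2 / c"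
proof -
  have "0 \<le> inner (c *\<^sub>R a - b) (c *\<^sub>R a - b)"
    by simp
  also have "\<dots> = c\<^sup>2 * inner a a - 2 * c * inner a b + inner b b"
    by (simp add: inner_diff_left inner_diff_right inner_commute power2_eq_square algebra_simps)
  also have "inner a a = (norm a)\<^sup>2"
    by (simp add: power2_norm_eq_inner)
  also have "inner b b = (norm b)\<^sup>2"
    by (simp add: power2_norm_eq_inner)
  finally have "2 * inner a b * c \<le> c\<^sup>2 * (norm a)\<^sup>2 + (norm b)\<^sup>2"
    by (simp add: algebra_simps)
  then show ?thesis
    using assms by (simp add: field_simps power2_eq_square)
qed

lemma normN_sq_increment_le:
  fixes \<Psi> :: "'a::euclidean_space \<Rightarrow> 'a \<Rightarrow> real" and X V F :: "real \<Rightarrow> nat \<Rightarrow> 'a"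
  assumes sym: "\<And>y z. \<Psi> y z = \<Psi> z y" and nonneg: "\<And>y z. 0 \<le> \<Psi> y z"
    and odd: "\<And>d. \<sigma> (- d) = - \<sigma> d" and monotone: "\<And>d. 0 \<le> inner d (\<sigma> d)"
    and "a \<le> b"
    and integrable: "\<And>i. i < N \<Longrightarrow>
      (\<lambda>s. consensus \<Psi> N \<sigma> (X s) (V s) i + F s i) absolutely_integrable_on {a..b}"
    and solution: "\<And>i t. i < N \<Longrightarrow> t \<in> {a..b} \<Longrightarrow>
      ((\<lambda>s. consensus \<Psi> N \<sigma> (X s) (V s) i + F s i) has_integral (V t i - V a i)) {a..t}"
    and bound: "\<And>s. s \<in> {a..b} \<Longrightarrow> 2 / real N * (\<Sum>i<N. inner (V s i - c) (F s i)) \<le> \<phi> s"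
    and \<phi>: "\<phi> integrable_on {a..b}"
  shows "normN_sq N (\<lambda>i. V b i - c) - normN_sq N (\<lambda>i. V a i - c) \<le> integral {a..b} \<phi>"
proof -
  let ?rhs = "\<lambda>s i. consensus \<Psi> N \<sigma> (X s) (V s) i + F s i"
  have "((\<lambda>s. 2 * inner (V s i - c) (?rhs s i)) has_integral
          (norm (V b i - c))\<^sup>2 - (norm (V a i - c))\<^sup>2) {a..b}" if "i < N" for i
    using has_integral_norm_power2_increment[OF \<open>a \<le> b\<close> integrable[OF that], of "\<lambda>t. V t i - c"]
      solution[OF that] by simp
  then have energy: "((\<lambda>s. 1 / real N * (\<Sum>i<N. 2 * inner (V s i - c) (?rhs s i))) has_integral
               normN_sq N (\<lambda>i. V b i - c) - normN_sq N (\<lambda>i. V a i - c)) {a..b}"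
    unfolding normN_sq_def right_diff_distrib[symmetric] sum_subtractf[symmetric]
    by (intro has_integral_mult_right has_integral_sum) auto
  moreover have "1 / real N * (\<Sum>i<N. 2 * inner (V s i - c) (?rhs s i)) \<le> \<phi> s" if "s \<in> {a..b}" for s
  proof -
    have "(\<Sum>i<N. inner (V s i - c) (consensus \<Psi> N \<sigma> (X s) (V s) i)) \<le> 0"
      using sym nonneg odd monotone by (rule sum_inner_consensus_nonpos)
    with mult_nonneg_nonpos[of "2 / real N"]
    have "2 / real N * (\<Sum>i<N. inner (V s i - c) (consensus \<Psi> N \<sigma> (X s) (V s) i)) \<le> 0"
      by simp
    moreover have "1 / real N * (\<Sum>i<N. 2 * inner (V s i - c) (?rhs s i))
        = 2 / real N * (\<Sum>i<N. inner (V s i - c) (consensus \<Psi> N \<sigma> (X s) (V s) i))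
          + 2 / real N * (\<Sum>i<N. inner (V s i - c) (F s i))"
      by (simp add: inner_add_right sum.distrib distrib_left sum_distrib_left)
    ultimately show ?thesis
      using bound[OF that] by linarith
  qed
  ultimately show ?thesis
    using has_integral_le[OF energy integrable_integral[OF \<phi>]] by blast
qed

definition running_cost ::
  "nat \<Rightarrow> real \<Rightarrow> 'a::euclidean_space \<Rightarrow> (real \<Rightarrow> ('a \<times> 'a) \<Rightarrow> 'a)
   \<Rightarrow> (real \<Rightarrow> nat \<Rightarrow> 'a) \<Rightarrow> (real \<Rightarrow> nat \<Rightarrow> 'a) \<Rightarrow> real \<Rightarrow> real" where
  "running_cost N lam vbar f x v t =
     normN_sq N (\<lambda>i. v t i - vbar) + lam * normN_sq N (\<lambda>i. f t (x t i, v t i))"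

lemma cost_eq_integral_running_cost:
  "cost N lam a T vbar f x v = integral {a..T} (running_cost N lam vbar f x v)"
  unfolding cost_def running_cost_def[abs_def] ..

lemma running_cost_nonneg:
  assumes "0 \<le> lam"
  shows "0 \<le> running_cost N lam vbar f x v t"
  using assms by (simp add: running_cost_def normN_sq_def sum_nonneg)

lemma is_traj_continuous_on:
  assumes "is_traj \<Psi> N a T f xa va x v" and "i < N"
  shows "continuous_on {a..T} (\<lambda>t. x t i)" and "continuous_on {a..T} (\<lambda>t. v t i)"
  using assms unfolding is_traj_def by (auto intro: continuous_on_has_integral_primitive)

lemma is_traj_initial:
  assumes "is_traj \<Psi> N a T f xa va x v" and "a \<le> T" and "i < N"
  shows "x a i = xa i" and "v a i = va i"
proof -
  have "a \<in> {a..T}"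
    using \<open>a \<le> T\<close> by simp
  then have "((\<lambda>s. v s i) has_integral (x a i - xa i)) {a..a}"
    and "((\<lambda>s. cs_rhs \<Psi> N f x v i s) has_integral (v a i - va i)) {a..a}"
    using assms(1,3) unfolding is_traj_def by blast+
  then show "x a i = xa i" and "v a i = va i"
    by (auto intro: has_integral_primitive_initial[where V = "\<lambda>t. x t i"]
                    has_integral_primitive_initial[where V = "\<lambda>t. v t i"])
qed

lemma continuous_on_consensus:
  fixes \<Psi> :: "'a::real_normed_vector \<Rightarrow> 'a \<Rightarrow> real"
  assumes \<Psi>: "continuous_on UNIV (\<lambda>(y, z). \<Psi> y z)" and \<sigma>: "continuous_on UNIV \<sigma>"
    and x: "\<And>j. j < N \<Longrightarrow> continuous_on S (\<lambda>s. x s j)"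
    and v: "\<And>j. j < N \<Longrightarrow> continuous_on S (\<lambda>s. v s j)" and "i < N"
  shows "continuous_on S (\<lambda>s. consensus \<Psi> N \<sigma> (x s) (v s) i)"
proof -
  have "continuous_on S (\<lambda>s. \<Psi> (x s i) (x s j) *\<^sub>R \<sigma> (v s j - v s i))" if "j < N" for j
  proof (intro continuous_on_scaleR)
    show "continuous_on S (\<lambda>s. \<Psi> (x s i) (x s j))"
      using continuous_on_compose2[OF \<Psi> continuous_on_Pair[OF x[OF \<open>i < N\<close>] x[OF that]]] by simp
    show "continuous_on S (\<lambda>s. \<sigma> (v s j - v s i))"
      using continuous_on_compose2[OF \<sigma> continuous_on_diff[OF v[OF that] v[OF \<open>i < N\<close>]]] by simp
  qed
  then show ?thesis
    unfolding consensus_def by (intro continuous_on_scaleR[OF continuous_on_const] continuous_on_sum) auto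
qed

lemma absolutely_integrable_on_AE_bounded:
  fixes g :: "real \<Rightarrow> 'b::euclidean_space"
  assumes g: "g \<in> borel_measurable (lebesgue_on {a..b})"
    and bound: "AE t in lebesgue_on {a..b}. norm (g t) \<le> B"
  shows "g absolutely_integrable_on {a..b}"
proof -
  have "integrable (lebesgue_on {a..b}) (\<lambda>t. B)"
    using absolutely_integrable_continuous_real[OF continuous_on_const]
    by (simp add: absolutely_integrable_measurable o_def)
  then have "integrable (lebesgue_on {a..b}) g"
  proof (rule Bochner_Integration.integrable_bound[OF _ g])
    show "AE t in lebesgue_on {a..b}. norm (g t) \<le> norm B"
      using bound by eventually_elim auto
  qed
  then show ?thesis
    using g by (simp add: absolutely_integrable_measurable o_def integrable_norm_iff)
qed

lemma admissible_AE_norm_le: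
  assumes "admissible CB a T f"
    and p: "\<And>t. t \<in> {a..T} \<Longrightarrow> norm (p t) \<le> B" and "0 \<le> B"
  shows "AE t in lebesgue_on {a..T}. norm (f t (p t)) \<le> CB * (1 + B)"
proof -
  have "AE t in lebesgue_on {a..T}. \<exists>L. L-lipschitz_on UNIV (f t) \<and> norm (f t 0) + L \<le> CB"
    using assms unfolding admissible_def by blast
  with AE_space show ?thesis
  proof eventually_elim
    case (elim t)
    then obtain L where L: "L-lipschitz_on UNIV (f t)" and CB: "norm (f t 0) + L \<le> CB"
      by blast
    have "0 \<le> L"
      using L by (rule lipschitz_on_nonneg)
    have "norm (f t (p t)) \<le> norm (f t 0) + dist (f t (p t)) (f t 0)"
      by (simp add: dist_norm norm_triangle_sub)
    also have "\<dots> \<le> norm (f t 0) + L * norm (p t)"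
      using lipschitz_onD[OF L, of "p t" 0] by simp
    also have "\<dots> \<le> norm (f t 0) + L * B"
      using p[of t] elim \<open>0 \<le> L\<close> by (simp add: mult_left_mono)
    also have "\<dots> \<le> (norm (f t 0) + L) * (1 + B)"
      using \<open>0 \<le> L\<close> \<open>0 \<le> B\<close> by (simp add: algebra_simps)
    also have "\<dots> \<le> CB * (1 + B)"
      using CB \<open>0 \<le> B\<close> by (intro mult_right_mono) auto
    finally show ?case .
  qed
qed

text \<open>Measurability of the control along the trajectory comes from the velocity equation: it is
  the integrable right-hand side minus the continuous consensus term.\<close>
lemma admissible_control_along_traj:
  fixes \<Psi> :: "'a::euclidean_space \<Rightarrow> 'a \<Rightarrow> real"
  assumes \<Psi>: "continuous_on UNIV (\<lambda>(y, z). \<Psi> y z)" and f: "admissible CB a T f"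
    and traj: "is_traj \<Psi> N a T f xa va x v" and "a \<le> T" and "i < N"
  shows "(\<lambda>s. f s (x s i, v s i)) absolutely_integrable_on {a..T}"
    and "(\<lambda>s. (norm (f s (x s i, v s i)))\<^sup>2) integrable_on {a..T}"
proof -
  let ?F = "\<lambda>s. f s (x s i, v s i)"
  have xc: "continuous_on {a..T} (\<lambda>s. x s j)" and vc: "continuous_on {a..T} (\<lambda>s. v s j)"
    if "j < N" for j
    using is_traj_continuous_on[OF traj that] by auto
  have "T \<in> {a..T}"
    using \<open>a \<le> T\<close> by simp
  then have "(\<lambda>s. cs_rhs \<Psi> N f x v i s) integrable_on {a..T}"
    using traj \<open>i < N\<close> unfolding is_traj_def by blast
  moreover have "(\<lambda>s. consensus \<Psi> N (\<lambda>d. d) (x s) (v s) i) integrable_on {a..T}"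
    using \<Psi> xc vc \<open>i < N\<close>
    by (intro integrable_continuous_real continuous_on_consensus) (auto intro: continuous_on_id)
  ultimately have "(\<lambda>s. cs_rhs \<Psi> N f x v i s - consensus \<Psi> N (\<lambda>d. d) (x s) (v s) i) integrable_on {a..T}"
    by (rule integrable_diff)
  then have "?F integrable_on {a..T}"
    by (simp add: cs_rhs_eq_consensus)
  then have Fm: "?F \<in> borel_measurable (lebesgue_on {a..T})"
    by (rule integrable_imp_measurable)
  have "bounded ((\<lambda>s. (x s i, v s i)) ` {a..T})"
    using xc vc \<open>i < N\<close> by (intro compact_imp_bounded compact_continuous_image continuous_on_Pair) auto
  then obtain B where "B > 0" and B: "\<And>s. s \<in> {a..T} \<Longrightarrow> norm (x s i, v s i) \<le> B"
    unfolding bounded_pos by auto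
  then have "0 \<le> B"
    by simp
  have bound: "AE s in lebesgue_on {a..T}. norm (?F s) \<le> CB * (1 + B)"
    using f B \<open>0 \<le> B\<close> by (rule admissible_AE_norm_le)
  then show "?F absolutely_integrable_on {a..T}"
    using Fm by (intro absolutely_integrable_on_AE_bounded)
  have "(\<lambda>s. (norm (?F s))\<^sup>2) absolutely_integrable_on {a..T}"
  proof (rule absolutely_integrable_on_AE_bounded)
    show "(\<lambda>s. (norm (?F s))\<^sup>2) \<in> borel_measurable (lebesgue_on {a..T})"
      using Fm by (intro borel_measurable_power measurable_compose[OF Fm borel_measurable_norm])
    show "AE s in lebesgue_on {a..T}. norm ((norm (?F s))\<^sup>2) \<le> (CB * (1 + B))\<^sup>2"
      using bound by eventually_elim (simp add: power_mono)
  qed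
  then show "(\<lambda>s. (norm (?F s))\<^sup>2) integrable_on {a..T}"
    by (simp add: absolutely_integrable_on_def)
qed

lemma running_cost_integrable:
  fixes \<Psi> :: "'a::euclidean_space \<Rightarrow> 'a \<Rightarrow> real"
  assumes "continuous_on UNIV (\<lambda>(y, z). \<Psi> y z)" and "admissible CB a T f"
    and traj: "is_traj \<Psi> N a T f xa va x v" and "a \<le> T"
  shows "running_cost N lam vbar f x v integrable_on {a..T}"
proof -
  have "continuous_on {a..T} (\<lambda>s. normN_sq N (\<lambda>i. v s i - vbar))"
    unfolding normN_sq_def using is_traj_continuous_on(2)[OF traj]
    by (intro continuous_intros) auto
  moreover have "(\<lambda>s. normN_sq N (\<lambda>i. f s (x s i, v s i))) integrable_on {a..T}"
    unfolding normN_sq_def using admissible_control_along_traj(2)[OF assms]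
    by (intro integrable_on_mult_right integrable_sum) auto
  ultimately show ?thesis
    unfolding running_cost_def[abs_def]
    by (intro integrable_add integrable_on_mult_right) (auto intro: integrable_continuous_real)
qed

lemma sum_inner_control_le_running_cost:
  assumes "lam > 0"
  shows "2 / real N * (\<Sum>i<N. inner (v s i - vbar) (f s (x s i, v s i)))
           \<le> running_cost N lam vbar f x v s / sqrt lam"
proof -
  let ?F = "\<lambda>i. f s (x s i, v s i)"
  have Young: "2 * inner (v s i - vbar) (?F i) \<le> ((norm (v s i - vbar))\<^sup>2 + lam * (norm (?F i))\<^sup>2) / sqrt lam"
    for i
  proof -
    have "2 * inner (v s i - vbar) (?F i)
            \<le> (1 / sqrt lam) * (norm (v s i - vbar))\<^sup>2 + (norm (?F i))\<^sup>2 / (1 / sqrt lam)"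
      using assms by (intro two_inner_le_weighted_squares) simp
    also have "\<dots> = ((norm (v s i - vbar))\<^sup>2 + (sqrt lam)\<^sup>2 * (norm (?F i))\<^sup>2) / sqrt lam"
      using assms by (simp add: field_simps power2_eq_square)
    also have "(sqrt lam)\<^sup>2 = lam"
      using assms by simp
    finally show ?thesis .
  qed
  have "(\<Sum>i<N. 2 * inner (v s i - vbar) (?F i))
          \<le> (\<Sum>i<N. ((norm (v s i - vbar))\<^sup>2 + lam * (norm (?F i))\<^sup>2) / sqrt lam)"
    by (rule sum_mono) (rule Young)
  also have "\<dots> = ((\<Sum>i<N. (norm (v s i - vbar))\<^sup>2) + lam * (\<Sum>i<N. (norm (?F i))\<^sup>2)) / sqrt lam"
    by (simp add: sum_divide_distrib[symmetric] sum.distrib sum_distrib_left)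
  finally have "1 / real N * (\<Sum>i<N. 2 * inner (v s i - vbar) (?F i))
      \<le> 1 / real N * (((\<Sum>i<N. (norm (v s i - vbar))\<^sup>2) + lam * (\<Sum>i<N. (norm (?F i))\<^sup>2)) / sqrt lam)"
    by (rule mult_left_mono) simp
  then show ?thesis
    by (simp add: running_cost_def normN_sq_def sum_distrib_left divide_inverse algebra_simps)
qed

lemma normN_sq_increment_le_running_cost:
  fixes \<Psi> :: "'a::euclidean_space \<Rightarrow> 'a \<Rightarrow> real"
  assumes sym: "\<And>y z. \<Psi> y z = \<Psi> z y" and nonneg: "\<And>y z. 0 \<le> \<Psi> y z"
    and \<Psi>: "continuous_on UNIV (\<lambda>(y, z). \<Psi> y z)" and "lam > 0"
    and f: "admissible CB a T f" and traj: "is_traj \<Psi> N a T f xa va x v"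
    and "a \<le> t1" and "t1 \<le> t2" and "t2 \<le> T"
  shows "normN_sq N (\<lambda>i. v t2 i - vbar) - normN_sq N (\<lambda>i. v t1 i - vbar)
           \<le> integral {t1..t2} (running_cost N lam vbar f x v) / sqrt lam"
proof -
  let ?F = "\<lambda>s i. f s (x s i, v s i)"
  have "a \<le> T" and sub: "{t1..t2} \<subseteq> {a..T}"
    using assms by auto
  have "normN_sq N (\<lambda>i. v t2 i - vbar) - normN_sq N (\<lambda>i. v t1 i - vbar)
          \<le> integral {t1..t2} (\<lambda>s. running_cost N lam vbar f x v s / sqrt lam)"
  proof (rule normN_sq_increment_le[where \<sigma> = "\<lambda>d. d" and X = x and F = ?F, OF sym nonneg])
    fix i assume "i < N"
    have "continuous_on {a..T} (\<lambda>s. consensus \<Psi> N (\<lambda>d. d) (x s) (v s) i)"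
      using is_traj_continuous_on[OF traj] \<Psi> \<open>i < N\<close>
      by (intro continuous_on_consensus) (auto intro: continuous_on_id)
    then have "(\<lambda>s. consensus \<Psi> N (\<lambda>d. d) (x s) (v s) i) absolutely_integrable_on {t1..t2}"
      by (rule absolutely_integrable_continuous_real[OF continuous_on_subset[OF _ sub]])
    moreover have "(\<lambda>s. ?F s i) absolutely_integrable_on {t1..t2}"
      using admissible_control_along_traj(1)[OF \<Psi> f traj \<open>a \<le> T\<close> \<open>i < N\<close>] sub
      by (rule absolutely_integrable_on_subinterval)
    ultimately show "(\<lambda>s. consensus \<Psi> N (\<lambda>d. d) (x s) (v s) i + ?F s i) absolutely_integrable_on {t1..t2}"
      by (rule set_integral_add(1))
    fix t assume t: "t \<in> {t1..t2}"
    then have "t \<in> {a..T}" "t1 \<in> {a..T}"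
      using assms by auto
    then have "((\<lambda>s. cs_rhs \<Psi> N f x v i s) has_integral (v t i - va i)) {a..t}"
      and "((\<lambda>s. cs_rhs \<Psi> N f x v i s) has_integral (v t1 i - va i)) {a..t1}"
      using traj \<open>i < N\<close> unfolding is_traj_def by blast+
    from has_integral_Icc_subinterval_diff[OF this \<open>a \<le> t1\<close>] t
    show "((\<lambda>s. consensus \<Psi> N (\<lambda>d. d) (x s) (v s) i + ?F s i) has_integral (v t i - v t1 i)) {t1..t}"
      by (simp add: cs_rhs_eq_consensus)
  next
    show "2 / real N * (\<Sum>i<N. inner (v s i - vbar) (?F s i)) \<le> running_cost N lam vbar f x v s / sqrt lam"
      for s
      using \<open>lam > 0\<close> by (rule sum_inner_control_le_running_cost)
  next
    show "(\<lambda>s. running_cost N lam vbar f x v s / sqrt lam) integrable_on {t1..t2}"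
      using running_cost_integrable[OF \<Psi> f traj \<open>a \<le> T\<close>]
      by (intro integrable_on_divide) (rule integrable_on_subinterval[OF _ sub])
  qed (use \<open>t1 \<le> t2\<close> in auto)
  then show ?thesis
    by simp
qed

section \<open>The linear feedback\<close>

definition linear_feedback :: "real \<Rightarrow> 'a::real_vector \<Rightarrow> real \<Rightarrow> 'a \<times> 'a \<Rightarrow> 'a"
  where "linear_feedback c vbar t z = - c *\<^sub>R (snd z - vbar)"

lemma admissible_linear_feedback:
  fixes vbar :: "'a::euclidean_space"
  assumes "0 \<le> c" and "c * (1 + norm vbar) \<le> CB"
  shows "admissible CB a T (linear_feedback c vbar)"
  unfolding admissible_def
proof (intro conjI allI AE_I2 exI)
  show "(\<lambda>t. linear_feedback c vbar t z) \<in> borel_measurable (lebesgue_on {a..T})" for z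
    by (simp add: linear_feedback_def)
  fix t
  show "c-lipschitz_on UNIV (linear_feedback c vbar t)"
  proof (rule lipschitz_onI)
    fix p q :: "'a \<times> 'a"
    have "dist (linear_feedback c vbar t p) (linear_feedback c vbar t q) = c * norm (snd p - snd q)"
      using \<open>0 \<le> c\<close> by (simp add: linear_feedback_def dist_norm algebra_simps norm_minus_commute flip: scaleR_diff_right)
    also have "\<dots> \<le> c * dist p q"
      using \<open>0 \<le> c\<close> by (intro mult_left_mono) (cases p, cases q, simp_all add: dist_norm norm_snd_le)
    finally show "dist (linear_feedback c vbar t p) (linear_feedback c vbar t q) \<le> c * dist p q" .
  qed (rule \<open>0 \<le> c\<close>)
  show "norm (linear_feedback c vbar t 0) + c \<le> CB"
    using assms by (simp add: linear_feedback_def algebra_simps)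
qed

lemma running_cost_linear_feedback:
  assumes "lam > 0"
  shows "running_cost N lam vbar (linear_feedback (1 / sqrt lam) vbar) y w
           = (\<lambda>s. 2 * normN_sq N (\<lambda>i. w s i - vbar))"
proof
  fix s
  have "normN_sq N (\<lambda>i. linear_feedback (1 / sqrt lam) vbar s (y s i, w s i))
          = (1 / sqrt lam)\<^sup>2 * normN_sq N (\<lambda>i. w s i - vbar)"
    using assms by (simp add: normN_sq_def linear_feedback_def power_divide sum_distrib_left mult.commute)
  moreover have "lam * (1 / sqrt lam)\<^sup>2 = 1"
    using assms by (simp add: power_divide)
  ultimately show "running_cost N lam vbar (linear_feedback (1 / sqrt lam) vbar) y w s
                     = 2 * normN_sq N (\<lambda>i. w s i - vbar)"
    by (simp add: running_cost_def mult.assoc[symmetric])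
qed

lemma linear_feedback_cost_le:
  fixes \<Psi> :: "'a::euclidean_space \<Rightarrow> 'a \<Rightarrow> real"
  assumes sym: "\<And>y z. \<Psi> y z = \<Psi> z y" and nonneg: "\<And>y z. 0 \<le> \<Psi> y z"
    and \<Psi>: "continuous_on UNIV (\<lambda>(y, z). \<Psi> y z)" and "lam > 0" and "a \<le> T"
    and traj: "is_traj \<Psi> N a T (linear_feedback (1 / sqrt lam) vbar) xa va y w"
  shows "cost N lam a T vbar (linear_feedback (1 / sqrt lam) vbar) y w
           \<le> sqrt lam * normN_sq N (\<lambda>i. va i - vbar)"
proof -
  let ?c = "1 / sqrt lam" and ?g = "linear_feedback (1 / sqrt lam) vbar"
  let ?e = "\<lambda>s. normN_sq N (\<lambda>i. w s i - vbar)" and ?F = "\<lambda>s i. - (1 / sqrt lam) *\<^sub>R (w s i - vbar)"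
  have yc: "continuous_on {a..T} (\<lambda>s. y s i)" and wc: "continuous_on {a..T} (\<lambda>s. w s i)"
    if "i < N" for i
    using is_traj_continuous_on[OF traj that] by auto
  have ec: "continuous_on {a..T} ?e"
    unfolding normN_sq_def using wc by (intro continuous_intros) auto
  have "?e T - ?e a \<le> integral {a..T} (\<lambda>s. - 2 * ?c * ?e s)"
  proof (rule normN_sq_increment_le[where \<sigma> = "\<lambda>d. d" and X = y and F = ?F, OF sym nonneg])
    fix i assume "i < N"
    have "continuous_on {a..T} (\<lambda>s. consensus \<Psi> N (\<lambda>d. d) (y s) (w s) i)"
      using yc wc \<Psi> \<open>i < N\<close> by (intro continuous_on_consensus) (auto intro: continuous_on_id)
    then have "continuous_on {a..T} (\<lambda>s. consensus \<Psi> N (\<lambda>d. d) (y s) (w s) i + ?F s i)"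
      using wc[OF \<open>i < N\<close>] by (intro continuous_intros)
    then show "(\<lambda>s. consensus \<Psi> N (\<lambda>d. d) (y s) (w s) i + ?F s i) absolutely_integrable_on {a..T}"
      by (rule absolutely_integrable_continuous_real)
    fix t assume "t \<in> {a..T}"
    then have "((\<lambda>s. cs_rhs \<Psi> N ?g y w i s) has_integral (w t i - va i)) {a..t}"
      using traj \<open>i < N\<close> unfolding is_traj_def by blast
    then show "((\<lambda>s. consensus \<Psi> N (\<lambda>d. d) (y s) (w s) i + ?F s i) has_integral (w t i - w a i)) {a..t}"
      using is_traj_initial(2)[OF traj \<open>a \<le> T\<close> \<open>i < N\<close>]
      by (simp add: cs_rhs_eq_consensus linear_feedback_def)
  next
    show "2 / real N * (\<Sum>i<N. inner (w s i - vbar) (?F s i)) \<le> - 2 * ?c * ?e s" for s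
      by (simp add: normN_sq_def power2_norm_eq_inner sum_distrib_left mult.commute)
    show "(\<lambda>s. - 2 * ?c * ?e s) integrable_on {a..T}"
      using ec by (intro integrable_continuous_real continuous_intros)
  qed (use \<open>a \<le> T\<close> in auto)
  moreover have "?e a = normN_sq N (\<lambda>i. va i - vbar)"
    unfolding normN_sq_def using is_traj_initial(2)[OF traj \<open>a \<le> T\<close>] by simp
  moreover have "0 \<le> ?e T"
    by (simp add: normN_sq_def sum_nonneg)
  ultimately have "?c * (2 * integral {a..T} ?e) \<le> normN_sq N (\<lambda>i. va i - vbar)"
    by simp
  then have "2 * integral {a..T} ?e \<le> sqrt lam * normN_sq N (\<lambda>i. va i - vbar)"
    using \<open>lam > 0\<close> by (simp add: field_simps)
  then show ?thesis
    by (simp add: cost_eq_integral_running_cost running_cost_linear_feedback[OF \<open>lam > 0\<close>])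
qed

section \<open>Picard iteration\<close>

locale sum_lipschitz_field =
  fixes N :: nat and G :: "(nat \<Rightarrow> 'b::banach) \<Rightarrow> nat \<Rightarrow> 'b" and K :: real
  assumes K_nonneg: "0 \<le> K"
    and lipschitz: "\<And>z z'. (\<Sum>i<N. norm (G z i - G z' i)) \<le> K * (\<Sum>i<N. norm (z i - z' i))"
begin

lemma norm_diff_le: "i < N \<Longrightarrow> norm (G z i - G z' i) \<le> K * (\<Sum>j<N. norm (z j - z' j))"
  using member_le_sum[of i "{..<N}" "\<lambda>i. norm (G z i - G z' i)"] lipschitz[of z z'] by simp

lemma continuous_on_comp:
  assumes "\<And>j. j < N \<Longrightarrow> continuous_on S (\<lambda>t. \<phi> t j)" and "i < N"
  shows "continuous_on S (\<lambda>t. G (\<phi> t) i)"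
  unfolding continuous_on_def
proof
  fix t assume "t \<in> S"
  have "((\<lambda>s. K * (\<Sum>j<N. norm (\<phi> s j - \<phi> t j))) \<longlongrightarrow> K * (\<Sum>j<N. norm (\<phi> t j - \<phi> t j))) (at t within S)"
    using assms(1) \<open>t \<in> S\<close> by (intro tendsto_intros) (auto simp: continuous_on_def)
  moreover have "\<forall>s. norm (G (\<phi> s) i - G (\<phi> t) i) \<le> K * (\<Sum>j<N. norm (\<phi> s j - \<phi> t j))"
    using norm_diff_le[OF \<open>i < N\<close>] by simp
  ultimately have "((\<lambda>s. G (\<phi> s) i - G (\<phi> t) i) \<longlongrightarrow> 0) (at t within S)"
    by (simp add: Lim_null_comparison[OF always_eventually])
  then show "((\<lambda>s. G (\<phi> s) i) \<longlongrightarrow> G (\<phi> t) i) (at t within S)"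
    using Lim_null by blast
qed

lemma uniform_limit_comp:
  assumes lim: "\<And>j. j < N \<Longrightarrow> uniform_limit S (\<lambda>k t. \<psi> k t j) (\<lambda>t. \<phi> t j) sequentially"
    and "i < N"
  shows "uniform_limit S (\<lambda>k t. G (\<psi> k t) i) (\<lambda>t. G (\<phi> t) i) sequentially"
proof (rule uniform_limitI)
  fix e :: real assume "e > 0"
  define e' where "e' = e / (K * real N + 1)"
  have "K * real N + 1 > 0"
    using K_nonneg by (simp add: add_nonneg_pos)
  then have "e' > 0"
    using \<open>e > 0\<close> by (simp add: e'_def)
  then have "\<forall>\<^sub>F k in sequentially. \<forall>j\<in>{..<N}. \<forall>t\<in>S. dist (\<psi> k t j) (\<phi> t j) < e'"
    using uniform_limitD[OF lim] by (intro eventually_ball_finite) auto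
  then show "\<forall>\<^sub>F k in sequentially. \<forall>t\<in>S. dist (G (\<psi> k t) i) (G (\<phi> t) i) < e"
  proof (rule eventually_mono, intro ballI)
    fix k t assume close: "\<forall>j\<in>{..<N}. \<forall>t\<in>S. dist (\<psi> k t j) (\<phi> t j) < e'" and "t \<in> S"
    have "dist (G (\<psi> k t) i) (G (\<phi> t) i) \<le> K * (\<Sum>j<N. norm (\<psi> k t j - \<phi> t j))"
      using norm_diff_le[OF \<open>i < N\<close>] by (simp add: dist_norm)
    also have "\<dots> \<le> K * (real N * e')"
      using sum_bounded_above[of "{..<N}" "\<lambda>j. norm (\<psi> k t j - \<phi> t j)" e'] close \<open>t \<in> S\<close> K_nonneg
      by (intro mult_left_mono) (auto simp: dist_norm less_imp_le)
    also have "\<dots> < e"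
      using \<open>e > 0\<close> \<open>K * real N + 1 > 0\<close> by (simp add: e'_def field_simps)
    finally show "dist (G (\<psi> k t) i) (G (\<phi> t) i) < e" .
  qed
qed

definition picard_iterate :: "real \<Rightarrow> (nat \<Rightarrow> 'b) \<Rightarrow> nat \<Rightarrow> real \<Rightarrow> nat \<Rightarrow> 'b"
  where "picard_iterate a \<xi> k = ((\<lambda>\<phi> t i. \<xi> i + integral {a..t} (\<lambda>s. G (\<phi> s) i)) ^^ k) (\<lambda>t. \<xi>)"

lemma picard_iterate_0: "picard_iterate a \<xi> 0 t = \<xi>"
  by (simp add: picard_iterate_def)

lemma picard_iterate_Suc:
  "picard_iterate a \<xi> (Suc k) t i = \<xi> i + integral {a..t} (\<lambda>s. G (picard_iterate a \<xi> k s) i)"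
  by (simp add: picard_iterate_def)

lemma continuous_on_picard_iterate:
  assumes "i < N"
  shows "continuous_on {a..b} (\<lambda>t. picard_iterate a \<xi> k t i)"
  using assms
proof (induction k arbitrary: i)
  case 0
  then show ?case
    by (simp add: picard_iterate_0)
next
  case (Suc k)
  have "continuous_on {a..b} (\<lambda>s. G (picard_iterate a \<xi> k s) i)"
    using Suc by (intro continuous_on_comp)
  then have "continuous_on {a..b} (\<lambda>t. \<xi> i + integral {a..t} (\<lambda>s. G (picard_iterate a \<xi> k s) i))"
    by (intro continuous_intros indefinite_integral_continuous_1 integrable_continuous_real)
  then show ?case
    by (simp add: picard_iterate_Suc)
qed

lemma integrable_picard_iterate:
  assumes "i < N" and "t \<le> b"
  shows "(\<lambda>s. G (picard_iterate a \<xi> k s) i) integrable_on {a..t}"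
  using assms continuous_on_picard_iterate
  by (intro integrable_continuous_real continuous_on_comp) auto

lemma picard_iterate_step_le:
  assumes "t \<in> {a..b}"
  shows "(\<Sum>i<N. norm (picard_iterate a \<xi> (Suc k) t i - picard_iterate a \<xi> k t i))
           \<le> (b - a) * (\<Sum>i<N. norm (G \<xi> i)) * K ^ k * ((t - a) ^ k / fact k)"
  using assms
proof (induction k arbitrary: t)
  case 0
  then have "(\<Sum>i<N. norm (picard_iterate a \<xi> 1 t i - picard_iterate a \<xi> 0 t i))
               = (t - a) * (\<Sum>i<N. norm (G \<xi> i))"
    by (simp add: picard_iterate_Suc picard_iterate_0 sum_distrib_left)
  also have "\<dots> \<le> (b - a) * (\<Sum>i<N. norm (G \<xi> i))"
    using 0 by (intro mult_right_mono sum_nonneg) auto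
  finally show ?case
    by simp
next
  case (Suc k)
  let ?\<phi> = "picard_iterate a \<xi>" and ?M = "(b - a) * (\<Sum>i<N. norm (G \<xi> i))"
  let ?\<delta> = "\<lambda>s i. G (?\<phi> (Suc k) s) i - G (?\<phi> k s) i"
  have "t \<le> b" "a \<le> t"
    using Suc.prems by auto
  have cont: "continuous_on {a..t} (\<lambda>s. ?\<delta> s i)" if "i < N" for i
    using that continuous_on_picard_iterate by (intro continuous_intros continuous_on_comp)
  have "(\<Sum>i<N. norm (?\<phi> (Suc (Suc k)) t i - ?\<phi> (Suc k) t i))
          = (\<Sum>i<N. norm (integral {a..t} (\<lambda>s. ?\<delta> s i)))"
    using integrable_picard_iterate[OF _ \<open>t \<le> b\<close>]
    by (intro sum.cong refl) (simp add: picard_iterate_Suc integral_diff)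
  also have "\<dots> \<le> integral {a..t} (\<lambda>s. \<Sum>i<N. norm (?\<delta> s i))"
    using cont by (intro sum_norm_integral_le) auto
  also have "\<dots> \<le> integral {a..t} (\<lambda>s. K * (?M * K ^ k * ((s - a) ^ k / fact k)))"
  proof (rule integral_le)
    show "(\<lambda>s. \<Sum>i<N. norm (?\<delta> s i)) integrable_on {a..t}"
      using cont by (intro integrable_continuous_real continuous_on_sum continuous_on_norm) auto
    show "(\<lambda>s. K * (?M * K ^ k * ((s - a) ^ k / fact k))) integrable_on {a..t}"
      by (intro integrable_continuous_real continuous_intros) auto
    fix s assume "s \<in> {a..t}"
    then have "(\<Sum>i<N. norm (?\<phi> (Suc k) s i - ?\<phi> k s i)) \<le> ?M * K ^ k * ((s - a) ^ k / fact k)"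
      using \<open>t \<le> b\<close> by (intro Suc.IH) auto
    then show "(\<Sum>i<N. norm (?\<delta> s i)) \<le> K * (?M * K ^ k * ((s - a) ^ k / fact k))"
      using lipschitz[of "?\<phi> (Suc k) s" "?\<phi> k s"] K_nonneg by (meson mult_left_mono order_trans)
  qed
  also have "\<dots> = ?M * K ^ Suc k * ((t - a) ^ Suc k / fact (Suc k))"
    using integral_unique[OF has_integral_mult_right[OF has_integral_power_div_fact[OF \<open>a \<le> t\<close>],
          of "K * (?M * K ^ k)" k]]
    by (simp add: algebra_simps)
  finally show ?case .
qed

lemma picard_iterate_uniform_limit:
  fixes a b :: real
  obtains \<phi> where
    "\<And>i. i < N \<Longrightarrow> uniform_limit {a..b} (\<lambda>k t. picard_iterate a \<xi> k t i) (\<lambda>t. \<phi> t i) sequentially"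
proof -
  let ?\<phi> = "picard_iterate a \<xi>" and ?M = "(b - a) * (\<Sum>i<N. norm (G \<xi> i))"
  define d where "d k t i = ?\<phi> (Suc k) t i - ?\<phi> k t i" for k t i
  define B where "B k = \<bar>?M\<bar> * (K * \<bar>b - a\<bar>) ^ k / fact k" for k
  have telescope: "?\<phi> k t i = \<xi> i + (\<Sum>j<k. d j t i)" for k t i
    by (induction k) (auto simp: d_def picard_iterate_0)
  have "summable (\<lambda>k. \<bar>?M\<bar> * (inverse (fact k) * (K * \<bar>b - a\<bar>) ^ k))"
    by (intro summable_mult summable_exp)
  moreover have "(\<lambda>k. \<bar>?M\<bar> * (inverse (fact k) * (K * \<bar>b - a\<bar>) ^ k)) = B"
    by (rule ext) (simp add: B_def field_simps)
  ultimately have "summable B"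
    by simp
  moreover have "norm (d k t i) \<le> B k" if "t \<in> {a..b}" "i < N" for k t i
  proof -
    have "norm (d k t i) \<le> (\<Sum>i<N. norm (d k t i))"
      using that(2) by (intro member_le_sum) auto
    also have "\<dots> \<le> ?M * K ^ k * ((t - a) ^ k / fact k)"
      unfolding d_def using that(1) by (rule picard_iterate_step_le)
    also have "\<dots> \<le> ?M * K ^ k * ((b - a) ^ k / fact k)"
      using that(1) K_nonneg
      by (intro mult_left_mono divide_right_mono power_mono mult_nonneg_nonneg sum_nonneg) auto
    also have "\<dots> = B k"
      using that(1) K_nonneg by (simp add: B_def power_mult_distrib abs_of_nonneg sum_nonneg)
    finally show ?thesis .
  qed
  ultimately have "uniform_limit {a..b} (\<lambda>k t. \<Sum>j<k. d j t i) (\<lambda>t. \<Sum>j. d j t i) sequentially"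
    if "i < N" for i
    using that by (intro Weierstrass_m_test) auto
  then have "uniform_limit {a..b} (\<lambda>k t. ?\<phi> k t i) (\<lambda>t. \<xi> i + (\<Sum>j. d j t i)) sequentially"
    if "i < N" for i
    unfolding telescope using that by (intro uniform_limit_add uniform_limit_const)
  then show ?thesis
    by (rule that)
qed

lemma picard_existence:
  fixes a b :: real
  obtains \<phi> where "\<And>i. i < N \<Longrightarrow> continuous_on {a..b} (\<lambda>t. \<phi> t i)"
    and "\<And>t i. t \<in> {a..b} \<Longrightarrow> i < N \<Longrightarrow> ((\<lambda>s. G (\<phi> s) i) has_integral (\<phi> t i - \<xi> i)) {a..t}"
proof -
  let ?\<phi> = "picard_iterate a \<xi>"
  obtain \<phi> where lim: "\<And>i. i < N \<Longrightarrow> uniform_limit {a..b} (\<lambda>k t. ?\<phi> k t i) (\<lambda>t. \<phi> t i) sequentially"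
    using picard_iterate_uniform_limit by blast
  have "continuous_on {a..b} (\<lambda>t. \<phi> t i)" if "i < N" for i
    using continuous_on_picard_iterate[OF that]
    by (intro uniform_limit_theorem[OF always_eventually lim[OF that]]) auto
  moreover have "((\<lambda>s. G (\<phi> s) i) has_integral (\<phi> t i - \<xi> i)) {a..t}"
    if "t \<in> {a..b}" and "i < N" for t i
  proof -
    have "uniform_limit {a..t} (\<lambda>k s. G (?\<phi> k s) i) (\<lambda>s. G (\<phi> s) i) sequentially"
      using that by (intro uniform_limit_on_subset[OF uniform_limit_comp[OF lim]]) auto
    then obtain I J where I: "\<And>k. ((\<lambda>s. G (?\<phi> k s) i) has_integral I k) {a..t}"
      and J: "((\<lambda>s. G (\<phi> s) i) has_integral J) {a..t}" and "I \<longlonglongrightarrow> J"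
      by (rule uniform_limit_integral) (auto intro: continuous_on_comp continuous_on_picard_iterate \<open>i < N\<close>)
    then have "(\<lambda>k. ?\<phi> (Suc k) t i) \<longlonglongrightarrow> \<xi> i + J"
      by (simp add: picard_iterate_Suc integral_unique[OF I] tendsto_add_const_iff)
    moreover have "(\<lambda>k. ?\<phi> (Suc k) t i) \<longlonglongrightarrow> \<phi> t i"
      using tendsto_uniform_limitI[OF lim[OF \<open>i < N\<close>] \<open>t \<in> {a..b}\<close>] by (rule LIMSEQ_Suc)
    ultimately have "\<phi> t i = \<xi> i + J"
      using LIMSEQ_unique by blast
    then show ?thesis
      using J by simp
  qed
  ultimately show ?thesis
    using that by blast
qed

end

section \<open>Existence of the closed-loop trajectory\<close>

lemma closest_point_cball_uminus:
  fixes d :: "'a::euclidean_space"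
  assumes "0 \<le> R"
  shows "closest_point (cball 0 R) (- d) = - closest_point (cball 0 R) d"
proof (rule closest_point_unique[symmetric])
  have "closest_point (cball 0 R) d \<in> cball 0 R"
    using assms by (intro closest_point_in_set) auto
  then show "- closest_point (cball 0 R) d \<in> cball 0 R"
    by simp
  show "\<forall>z\<in>cball 0 R. dist (- d) (- closest_point (cball 0 R) d) \<le> dist (- d) z"
  proof
    fix z :: 'a assume "z \<in> cball 0 R"
    then have "dist d (closest_point (cball 0 R) d) \<le> dist d (- z)"
      by (intro closest_point_le) auto
    then show "dist (- d) (- closest_point (cball 0 R) d) \<le> dist (- d) z"
      by (simp add: dist_norm norm_minus_commute add.commute)
  qed
qed auto

lemma inner_closest_point_cball_nonneg:
  fixes d :: "'a::euclidean_space"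
  assumes "0 \<le> R"
  shows "0 \<le> inner d (closest_point (cball 0 R) d)"
proof -
  let ?p = "closest_point (cball 0 R) d"
  have "inner (d - ?p) (0 - ?p) \<le> 0"
    using assms by (intro closest_point_dot) auto
  then have "inner ?p ?p \<le> inner d ?p"
    by (simp add: inner_diff_left inner_diff_right inner_commute)
  then show ?thesis
    using inner_ge_zero[of ?p] by linarith
qed

definition closed_loop_field ::
  "('a::real_normed_vector \<Rightarrow> 'a \<Rightarrow> real) \<Rightarrow> nat \<Rightarrow> ('a \<Rightarrow> 'a) \<Rightarrow> real \<Rightarrow> 'a
   \<Rightarrow> (nat \<Rightarrow> 'a \<times> 'a) \<Rightarrow> nat \<Rightarrow> 'a \<times> 'a" where
  "closed_loop_field \<Psi> N \<sigma> c vbar z i =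
     (snd (z i), consensus \<Psi> N \<sigma> (\<lambda>j. fst (z j)) (\<lambda>j. snd (z j)) i - c *\<^sub>R (snd (z i) - vbar))"

lemma norm_fst_diff_le: "norm (fst p - fst q) \<le> norm (p - q)"
proof -
  have "p - q = (fst p - fst q, snd p - snd q)"
    by (simp add: prod_eq_iff)
  then show ?thesis
    by (simp add: norm_fst_le)
qed

lemma norm_snd_diff_le: "norm (snd p - snd q) \<le> norm (p - q)"
proof -
  have "p - q = (fst p - fst q, snd p - snd q)"
    by (simp add: prod_eq_iff)
  then show ?thesis
    by (simp add: norm_snd_le)
qed

lemma norm_interaction_diff_le:
  fixes \<Psi> :: "'a::real_normed_vector \<Rightarrow> 'a \<Rightarrow> real" and p1 p2 q1 q2 :: "'a \<times> 'a"
  assumes "0 \<le> L" and \<Psi>_lip: "\<And>y z y' z'. \<bar>\<Psi> y z - \<Psi> y' z'\<bar> \<le> L * (norm (y - y') + norm (z - z'))"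
    and \<Psi>_bound: "\<And>y z. \<bar>\<Psi> y z\<bar> \<le> C"
    and \<sigma>_bound: "\<And>d. norm (\<sigma> d) \<le> R" and \<sigma>_lip: "\<And>d d'. norm (\<sigma> d - \<sigma> d') \<le> norm (d - d')"
  shows "norm (\<Psi> (fst p1) (fst p2) *\<^sub>R \<sigma> (snd p2 - snd p1) - \<Psi> (fst q1) (fst q2) *\<^sub>R \<sigma> (snd q2 - snd q1))
           \<le> (L * R + C) * (norm (p1 - q1) + norm (p2 - q2))"
proof -
  let ?n = "norm (p1 - q1) + norm (p2 - q2)"
  let ?\<Psi>p = "\<Psi> (fst p1) (fst p2)" and ?\<Psi>q = "\<Psi> (fst q1) (fst q2)"
  let ?\<sigma>p = "\<sigma> (snd p2 - snd p1)" and ?\<sigma>q = "\<sigma> (snd q2 - snd q1)"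
  have "\<bar>?\<Psi>p - ?\<Psi>q\<bar> \<le> L * ?n"
    using \<Psi>_lip[of "fst p1" "fst p2" "fst q1" "fst q2"] norm_fst_diff_le[of p1 q1] norm_fst_diff_le[of p2 q2]
      \<open>0 \<le> L\<close> by (smt (verit) mult_left_mono)
  moreover have "norm (?\<sigma>p - ?\<sigma>q) \<le> ?n"
  proof -
    have "norm (?\<sigma>p - ?\<sigma>q) \<le> norm ((snd p2 - snd p1) - (snd q2 - snd q1))"
      by (rule \<sigma>_lip)
    also have "\<dots> = norm ((snd p2 - snd q2) - (snd p1 - snd q1))"
      by (simp add: algebra_simps)
    also have "\<dots> \<le> norm (snd p2 - snd q2) + norm (snd p1 - snd q1)"
      by (rule norm_triangle_ineq4)
    finally show ?thesis
      using norm_snd_diff_le[of p1 q1] norm_snd_diff_le[of p2 q2] by simp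
  qed
  moreover have "?\<Psi>p *\<^sub>R ?\<sigma>p - ?\<Psi>q *\<^sub>R ?\<sigma>q = (?\<Psi>p - ?\<Psi>q) *\<^sub>R ?\<sigma>p + ?\<Psi>q *\<^sub>R (?\<sigma>p - ?\<sigma>q)"
    by (simp add: algebra_simps)
  then have "norm (?\<Psi>p *\<^sub>R ?\<sigma>p - ?\<Psi>q *\<^sub>R ?\<sigma>q) \<le> \<bar>?\<Psi>p - ?\<Psi>q\<bar> * norm ?\<sigma>p + \<bar>?\<Psi>q\<bar> * norm (?\<sigma>p - ?\<sigma>q)"
    by (metis norm_scaleR norm_triangle_ineq)
  ultimately show ?thesis
    using \<sigma>_bound[of "snd p2 - snd p1"] \<Psi>_bound[of "fst q1" "fst q2"] \<open>0 \<le> L\<close>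
    by (smt (verit) distrib_right mult.assoc mult.commute mult_mono norm_ge_zero abs_ge_zero)
qed

lemma norm_consensus_diff_le:
  fixes \<Psi> :: "'a::real_normed_vector \<Rightarrow> 'a \<Rightarrow> real" and z z' :: "nat \<Rightarrow> 'a \<times> 'a"
  assumes "0 \<le> L"
    and \<Psi>_lip: "\<And>y z y' z'. \<bar>\<Psi> y z - \<Psi> y' z'\<bar> \<le> L * (norm (y - y') + norm (z - z'))"
    and \<Psi>_bound: "\<And>y z. \<bar>\<Psi> y z\<bar> \<le> C"
    and \<sigma>_bound: "\<And>d. norm (\<sigma> d) \<le> R" and \<sigma>_lip: "\<And>d d'. norm (\<sigma> d - \<sigma> d') \<le> norm (d - d')"
  shows "norm (consensus \<Psi> N \<sigma> (\<lambda>j. fst (z j)) (\<lambda>j. snd (z j)) i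
                - consensus \<Psi> N \<sigma> (\<lambda>j. fst (z' j)) (\<lambda>j. snd (z' j)) i)
           \<le> (L * R + C) * norm (z i - z' i) + (L * R + C) / real N * (\<Sum>j<N. norm (z j - z' j))"
proof -
  define n where "n i = norm (z i - z' i)" for i
  define A where "A = L * R + C"
  have "0 \<le> A"
    using \<Psi>_bound[of undefined undefined] \<sigma>_bound[of undefined] \<open>0 \<le> L\<close>
    unfolding A_def by (smt (verit) mult_nonneg_nonneg norm_ge_zero)
  have "norm (consensus \<Psi> N \<sigma> (\<lambda>j. fst (z j)) (\<lambda>j. snd (z j)) i
                - consensus \<Psi> N \<sigma> (\<lambda>j. fst (z' j)) (\<lambda>j. snd (z' j)) i)
        = norm (\<Sum>j<N. \<Psi> (fst (z i)) (fst (z j)) *\<^sub>R \<sigma> (snd (z j) - snd (z i))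
                       - \<Psi> (fst (z' i)) (fst (z' j)) *\<^sub>R \<sigma> (snd (z' j) - snd (z' i))) / real N"
    by (simp add: consensus_def sum_subtractf flip: scaleR_diff_right)
  also have "\<dots> \<le> (\<Sum>j<N. A * (n i + n j)) / real N"
    unfolding A_def n_def
    by (intro divide_right_mono order_trans[OF norm_sum] sum_mono
        norm_interaction_diff_le[OF \<open>0 \<le> L\<close> \<Psi>_lip \<Psi>_bound \<sigma>_bound \<sigma>_lip]) auto
  also have "\<dots> = real N / real N * (A * n i) + A / real N * (\<Sum>j<N. n j)"
    by (simp add: distrib_left sum.distrib sum_distrib_left add_divide_distrib sum_divide_distrib)
  also have "\<dots> \<le> A * n i + A / real N * (\<Sum>j<N. n j)"
    using \<open>0 \<le> A\<close> by (simp add: n_def mult_left_le_one_le)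
  finally show ?thesis
    unfolding A_def n_def .
qed

lemma closed_loop_field_lipschitz:
  fixes \<Psi> :: "'a::real_normed_vector \<Rightarrow> 'a \<Rightarrow> real" and z z' :: "nat \<Rightarrow> 'a \<times> 'a"
  assumes "0 \<le> c" and "0 \<le> L"
    and \<Psi>_lip: "\<And>y z y' z'. \<bar>\<Psi> y z - \<Psi> y' z'\<bar> \<le> L * (norm (y - y') + norm (z - z'))"
    and \<Psi>_bound: "\<And>y z. \<bar>\<Psi> y z\<bar> \<le> C"
    and \<sigma>_bound: "\<And>d. norm (\<sigma> d) \<le> R" and \<sigma>_lip: "\<And>d d'. norm (\<sigma> d - \<sigma> d') \<le> norm (d - d')"
  shows "(\<Sum>i<N. norm (closed_loop_field \<Psi> N \<sigma> c vbar z i - closed_loop_field \<Psi> N \<sigma> c vbar z' i))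
           \<le> (1 + c + 2 * (L * R + C)) * (\<Sum>i<N. norm (z i - z' i))"
proof -
  define n where "n i = norm (z i - z' i)" for i
  define A where "A = L * R + C"
  let ?cons = "\<lambda>z. consensus \<Psi> N \<sigma> (\<lambda>j. fst (z j)) (\<lambda>j. snd (z j))"
  have "norm (closed_loop_field \<Psi> N \<sigma> c vbar z i - closed_loop_field \<Psi> N \<sigma> c vbar z' i)
          \<le> (1 + c + A) * n i + A / real N * (\<Sum>j<N. n j)" for i
  proof -
    let ?d = "snd (z i) - snd (z' i)"
    have "norm (closed_loop_field \<Psi> N \<sigma> c vbar z i - closed_loop_field \<Psi> N \<sigma> c vbar z' i)
            \<le> norm ?d + norm ((?cons z i - ?cons z' i) - c *\<^sub>R ?d)"
      unfolding closed_loop_field_def by (simp add: norm_Pair_le algebra_simps)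
    also have "\<dots> \<le> norm ?d + (norm (?cons z i - ?cons z' i) + c * norm ?d)"
      using \<open>0 \<le> c\<close> norm_triangle_ineq4[of "?cons z i - ?cons z' i" "c *\<^sub>R ?d"] by simp
    also have "\<dots> \<le> n i + (A * n i + A / real N * (\<Sum>j<N. n j) + c * n i)"
      using norm_consensus_diff_le[OF \<open>0 \<le> L\<close> \<Psi>_lip \<Psi>_bound \<sigma>_bound \<sigma>_lip, where z = z and z' = z' and i = i]
        norm_snd_diff_le[of "z i" "z' i"] \<open>0 \<le> c\<close>
      by (intro add_mono mult_left_mono) (auto simp: n_def A_def)
    finally show ?thesis
      by (simp add: algebra_simps)
  qed
  then have "(\<Sum>i<N. norm (closed_loop_field \<Psi> N \<sigma> c vbar z i - closed_loop_field \<Psi> N \<sigma> c vbar z' i))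
               \<le> (1 + c + A) * (\<Sum>i<N. n i) + real N * (A / real N) * (\<Sum>j<N. n j)"
    by (rule order_trans[OF sum_mono]) (simp add: sum.distrib sum_distrib_left)
  also have "real N * (A / real N) * (\<Sum>j<N. n j) = A * (\<Sum>j<N. n j)"
    by (cases "N = 0") simp_all
  finally show ?thesis
    unfolding A_def n_def by (simp add: algebra_simps)
qed

lemma lipschitz_on_pair_abs_le:
  fixes \<Psi> :: "'a::real_normed_vector \<Rightarrow> 'a \<Rightarrow> real"
  assumes "L-lipschitz_on UNIV (\<lambda>(y, z). \<Psi> y z)"
  shows "\<bar>\<Psi> y z - \<Psi> y' z'\<bar> \<le> L * (norm (y - y') + norm (z - z'))"
proof -
  have "\<bar>\<Psi> y z - \<Psi> y' z'\<bar> \<le> L * dist (y, z) (y', z')"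
    using lipschitz_onD[OF assms, of "(y, z)" "(y', z')"] by (simp add: dist_real_def)
  also have "\<dots> \<le> L * (norm (y - y') + norm (z - z'))"
    using lipschitz_on_nonneg[OF assms] norm_Pair_le[of "y - y'" "z - z'"]
    by (intro mult_left_mono) (simp_all add: dist_norm)
  finally show ?thesis .
qed

lemma normN_sq_closed_loop_le_initial:
  fixes \<Psi> :: "'a::euclidean_space \<Rightarrow> 'a \<Rightarrow> real" and y w :: "real \<Rightarrow> nat \<Rightarrow> 'a"
  assumes sym: "\<And>y z. \<Psi> y z = \<Psi> z y" and nonneg: "\<And>y z. 0 \<le> \<Psi> y z"
    and odd: "\<And>d. \<sigma> (- d) = - \<sigma> d" and monotone: "\<And>d. 0 \<le> inner d (\<sigma> d)"
    and "0 \<le> c" and "a \<le> t"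
    and cont: "\<And>i. i < N \<Longrightarrow>
      continuous_on {a..t} (\<lambda>s. consensus \<Psi> N \<sigma> (y s) (w s) i + - c *\<^sub>R (w s i - vbar))"
    and sol: "\<And>i s. i < N \<Longrightarrow> s \<in> {a..t} \<Longrightarrow>
      ((\<lambda>s. consensus \<Psi> N \<sigma> (y s) (w s) i + - c *\<^sub>R (w s i - vbar)) has_integral (w s i - w a i)) {a..s}"
  shows "normN_sq N (\<lambda>i. w t i - vbar) \<le> normN_sq N (\<lambda>i. w a i - vbar)"
proof -
  have "normN_sq N (\<lambda>i. w t i - vbar) - normN_sq N (\<lambda>i. w a i - vbar) \<le> integral {a..t} (\<lambda>s. 0)"
  proof (rule normN_sq_increment_le[OF sym nonneg odd monotone \<open>a \<le> t\<close> _ sol])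
    show "(\<lambda>s. consensus \<Psi> N \<sigma> (y s) (w s) i + - c *\<^sub>R (w s i - vbar)) absolutely_integrable_on {a..t}"
      if "i < N" for i
      using cont[OF that] by (rule absolutely_integrable_continuous_real)
    show "2 / real N * (\<Sum>i<N. inner (w s i - vbar) (- c *\<^sub>R (w s i - vbar))) \<le> 0" for s
    proof -
      have "(\<Sum>i<N. inner (w s i - vbar) (- c *\<^sub>R (w s i - vbar))) \<le> 0"
        using \<open>0 \<le> c\<close> by (intro sum_nonpos) simp
      then show ?thesis
        by (rule mult_nonneg_nonpos[rotated]) simp
    qed
  qed auto
  then show ?thesis
    by simp
qed

lemma truncated_closed_loop_solution:
  fixes \<Psi> :: "'a::euclidean_space \<Rightarrow> 'a \<Rightarrow> real" and \<xi> :: "nat \<Rightarrow> 'a \<times> 'a" and a T :: real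
  assumes nonneg: "\<And>y z. 0 \<le> \<Psi> y z" and bound: "\<And>y z. \<Psi> y z \<le> C\<Psi>"
    and lip: "L-lipschitz_on UNIV (\<lambda>(y, z). \<Psi> y z)" and "0 \<le> c" and "0 \<le> R"
  obtains \<phi> where
    "\<And>t i. t \<in> {a..T} \<Longrightarrow> i < N \<Longrightarrow> ((\<lambda>s. closed_loop_field \<Psi> N (closest_point (cball 0 R)) c vbar (\<phi> s) i)
                                      has_integral (\<phi> t i - \<xi> i)) {a..t}"
    and "\<And>i. i < N \<Longrightarrow>
      continuous_on {a..T} (\<lambda>s. closed_loop_field \<Psi> N (closest_point (cball 0 R)) c vbar (\<phi> s) i)"
proof -
  let ?\<sigma> = "closest_point (cball (0::'a) R)"
  interpret sum_lipschitz_field N "closed_loop_field \<Psi> N ?\<sigma> c vbar" "1 + c + 2 * (L * R + C\<Psi>)"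
  proof
    have "0 \<le> L" "0 \<le> C\<Psi>"
      using lipschitz_on_nonneg[OF lip] nonneg[of undefined undefined] bound[of undefined undefined]
      by auto
    then show "0 \<le> 1 + c + 2 * (L * R + C\<Psi>)"
      using \<open>0 \<le> c\<close> \<open>0 \<le> R\<close> by simp
    show "(\<Sum>i<N. norm (closed_loop_field \<Psi> N ?\<sigma> c vbar z i - closed_loop_field \<Psi> N ?\<sigma> c vbar z' i))
            \<le> (1 + c + 2 * (L * R + C\<Psi>)) * (\<Sum>i<N. norm (z i - z' i))" for z z'
    proof (rule closed_loop_field_lipschitz[OF \<open>0 \<le> c\<close> \<open>0 \<le> L\<close> lipschitz_on_pair_abs_le[OF lip]])
      show "\<bar>\<Psi> y z\<bar> \<le> C\<Psi>" for y z
        using nonneg[of y z] bound[of y z] by simp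
      have "?\<sigma> d \<in> cball 0 R" for d
        using \<open>0 \<le> R\<close> by (intro closest_point_in_set) auto
      then show "norm (?\<sigma> d) \<le> R" for d
        by simp
      show "norm (?\<sigma> d - ?\<sigma> d') \<le> norm (d - d')" for d d'
        using closest_point_lipschitz[of "cball (0::'a) R" d d'] \<open>0 \<le> R\<close> by (simp add: dist_norm)
    qed
  qed
  obtain \<phi> where "\<And>i. i < N \<Longrightarrow> continuous_on {a..T} (\<lambda>t. \<phi> t i)"
    and "\<And>t i. t \<in> {a..T} \<Longrightarrow> i < N \<Longrightarrow>
           ((\<lambda>s. closed_loop_field \<Psi> N ?\<sigma> c vbar (\<phi> s) i) has_integral (\<phi> t i - \<xi> i)) {a..t}"
    using picard_existence[where a = a and b = T and \<xi> = \<xi>] by blast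
  then show ?thesis
    using that continuous_on_comp by blast
qed

lemma norm_diff_le_of_normN_sq_le:
  fixes u :: "nat \<Rightarrow> 'a::real_normed_vector"
  assumes "normN_sq N (\<lambda>k. u k - c) \<le> E" and "i < N" and "j < N"
  shows "norm (u j - u i) \<le> 2 * sqrt (real N * E)"
proof -
  have close: "norm (u k - c) \<le> sqrt (real N * E)" if "k < N" for k
  proof -
    have "(norm (u k - c))\<^sup>2 \<le> (\<Sum>k<N. (norm (u k - c))\<^sup>2)"
      using \<open>k < N\<close> by (intro member_le_sum) auto
    also have "\<dots> = real N * normN_sq N (\<lambda>k. u k - c)"
      using \<open>k < N\<close> by (simp add: normN_sq_def)
    also have "\<dots> \<le> real N * E"
      using assms(1) by (intro mult_left_mono) auto
    finally show ?thesis
      by (simp add: real_le_rsqrt)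
  qed
  show ?thesis
    using norm_triangle_ineq4[of "u j - c" "u i - c"] close[OF \<open>i < N\<close>] close[OF \<open>j < N\<close>] by simp
qed

text \<open>The closed-loop system is only locally Lipschitz, so velocity differences are first
  projected onto the ball of radius \<open>R = 2 sqrt (N E)\<close>, with \<open>E\<close> the initial velocity energy.
  The projected system still dissipates energy, hence its velocity differences stay in that
  ball and the projection is never active.\<close>
lemma linear_feedback_traj_exists:
  fixes \<Psi> :: "'a::euclidean_space \<Rightarrow> 'a \<Rightarrow> real" and xa va :: "nat \<Rightarrow> 'a"
  assumes sym: "\<And>y z. \<Psi> y z = \<Psi> z y" and nonneg: "\<And>y z. 0 \<le> \<Psi> y z"
    and bound: "\<And>y z. \<Psi> y z \<le> C\<Psi>" and lip: "L-lipschitz_on UNIV (\<lambda>(y, z). \<Psi> y z)"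
    and "0 \<le> c" and "a \<le> T"
  obtains y w where "is_traj \<Psi> N a T (linear_feedback c vbar) xa va y w"
proof -
  define E where "E = normN_sq N (\<lambda>i. va i - vbar)"
  define R where "R = 2 * sqrt (real N * E)"
  have "0 \<le> R"
    by (simp add: R_def E_def normN_sq_def sum_nonneg)
  define \<sigma> where "\<sigma> = closest_point (cball (0::'a) R)"
  obtain \<phi> where \<phi>: "\<And>t i. t \<in> {a..T} \<Longrightarrow> i < N \<Longrightarrow>
      ((\<lambda>s. closed_loop_field \<Psi> N \<sigma> c vbar (\<phi> s) i) has_integral (\<phi> t i - (xa i, va i))) {a..t}"
    and \<phi>c: "\<And>i. i < N \<Longrightarrow> continuous_on {a..T} (\<lambda>s. closed_loop_field \<Psi> N \<sigma> c vbar (\<phi> s) i)"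
    unfolding \<sigma>_def
    by (rule truncated_closed_loop_solution[OF nonneg bound lip \<open>0 \<le> c\<close> \<open>0 \<le> R\<close>,
          where a = a and T = T and \<xi> = "\<lambda>i. (xa i, va i)"]) blast+
  define y where "y t i = fst (\<phi> t i)" for t i
  define w where "w t i = snd (\<phi> t i)" for t i
  let ?rhs = "\<lambda>\<sigma> s i. consensus \<Psi> N \<sigma> (y s) (w s) i + - c *\<^sub>R (w s i - vbar)"
  have position: "((\<lambda>s. w s i) has_integral (y t i - xa i)) {a..t}"
    and velocity: "((\<lambda>s. ?rhs \<sigma> s i) has_integral (w t i - va i)) {a..t}"
    if "t \<in> {a..T}" and "i < N" for t i
    using has_integral_linear[OF \<phi>[OF that] bounded_linear_fst]
      has_integral_linear[OF \<phi>[OF that] bounded_linear_snd]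
    by (simp_all add: o_def closed_loop_field_def y_def[abs_def] w_def[abs_def])
  have rhs_cont: "continuous_on {a..T} (\<lambda>s. ?rhs \<sigma> s i)" if "i < N" for i
    using continuous_on_snd[OF \<phi>c[OF that]] by (simp add: closed_loop_field_def y_def[abs_def] w_def[abs_def])
  have w_a: "w a i = va i" if "i < N" for i
    using velocity[OF _ that, of a] \<open>a \<le> T\<close> by (intro has_integral_primitive_initial) simp
  have energy: "normN_sq N (\<lambda>i. w t i - vbar) \<le> E" if "t \<in> {a..T}" for t
  proof -
    have "normN_sq N (\<lambda>i. w t i - vbar) \<le> normN_sq N (\<lambda>i. w a i - vbar)"
    proof (rule normN_sq_closed_loop_le_initial[OF sym nonneg _ _ \<open>0 \<le> c\<close>, where \<sigma> = \<sigma> and y = y])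
      show "\<sigma> (- d) = - \<sigma> d" and "0 \<le> inner d (\<sigma> d)" for d
        unfolding \<sigma>_def using \<open>0 \<le> R\<close>
        by (simp_all add: closest_point_cball_uminus inner_closest_point_cball_nonneg)
      show "continuous_on {a..t} (\<lambda>s. ?rhs \<sigma> s i)" if "i < N" for i
        using \<open>t \<in> {a..T}\<close> by (intro continuous_on_subset[OF rhs_cont[OF that]]) auto
      show "((\<lambda>s. ?rhs \<sigma> s i) has_integral (w s i - w a i)) {a..s}" if "i < N" and "s \<in> {a..t}" for i s
        using velocity[of s i] w_a[OF \<open>i < N\<close>] that \<open>t \<in> {a..T}\<close> by simp
    qed (use \<open>t \<in> {a..T}\<close> in auto)
    then show ?thesis
      using w_a by (simp add: E_def normN_sq_def)
  qed
  have "\<sigma> (w s j - w s i) = w s j - w s i" if "s \<in> {a..T}" and "i < N" and "j < N" for s i j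
    using norm_diff_le_of_normN_sq_le[OF energy[OF that(1)] that(2,3)]
    unfolding \<sigma>_def R_def by (intro closest_point_self) simp
  then have rhs_eq: "?rhs \<sigma> s i = cs_rhs \<Psi> N (linear_feedback c vbar) y w i s"
    if "s \<in> {a..T}" and "i < N" for s i
    using that by (simp add: cs_rhs_eq_consensus consensus_def linear_feedback_def)
  have "is_traj \<Psi> N a T (linear_feedback c vbar) xa va y w"
    unfolding is_traj_def
  proof (intro ballI allI impI conjI)
    fix t i assume "t \<in> {a..T}" and "i < N"
    then show "((\<lambda>s. w s i) has_integral (y t i - xa i)) {a..t}"
      by (rule position)
    show "((\<lambda>s. cs_rhs \<Psi> N (linear_feedback c vbar) y w i s) has_integral (w t i - va i)) {a..t}"
      using velocity[OF \<open>t \<in> {a..T}\<close> \<open>i < N\<close>]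
      by (rule has_integral_eq[rotated]) (use rhs_eq \<open>t \<in> {a..T}\<close> \<open>i < N\<close> in auto)
  qed
  then show ?thesis
    by (rule that)
qed

section \<open>Principle of optimality\<close>

lemma has_integral_glue:
  fixes h1 h2 :: "real \<Rightarrow> 'b::banach"
  assumes "(h1 has_integral A) {a..u}" and "(h2 has_integral B) {u..t}" and "a \<le> u" and "u \<le> t"
  shows "((\<lambda>s. if s < u then h1 s else h2 s) has_integral (A + B)) {a..t}"
proof (rule has_integral_combine[OF \<open>a \<le> u\<close> \<open>u \<le> t\<close>])
  show "((\<lambda>s. if s < u then h1 s else h2 s) has_integral A) {a..u}"
    by (rule has_integral_spike_finite[of "{u}", OF _ _ assms(1)]) auto
  show "((\<lambda>s. if s < u then h1 s else h2 s) has_integral B) {u..t}"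
    by (rule has_integral_eq[OF _ assms(2)]) auto
qed

lemma is_traj_append:
  assumes f: "is_traj \<Psi> N a T f xa va x v" and g: "is_traj \<Psi> N u T g (x u) (v u) y w"
    and "a \<le> u" and "u \<le> T"
  shows "is_traj \<Psi> N a T (\<lambda>t. if t < u then f t else g t) xa va
           (\<lambda>t. if t < u then x t else y t) (\<lambda>t. if t < u then v t else w t)"
  unfolding is_traj_def
proof (intro ballI allI impI)
  fix t i assume "t \<in> {a..T}" and "i < N"
  let ?x = "\<lambda>t. if t < u then x t else y t" and ?v = "\<lambda>t. if t < u then v t else w t"
  let ?f = "\<lambda>t. if t < u then f t else g t"
  have glue: "(\<lambda>s. ?v s i) = (\<lambda>s. if s < u then v s i else w s i)"
    "(\<lambda>s. cs_rhs \<Psi> N ?f ?x ?v i s) = (\<lambda>s. if s < u then cs_rhs \<Psi> N f x v i s else cs_rhs \<Psi> N g y w i s)"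
    by (auto simp: cs_rhs_def)
  show "((\<lambda>s. ?v s i) has_integral (?x t i - xa i)) {a..t} \<and>
        ((\<lambda>s. cs_rhs \<Psi> N ?f ?x ?v i s) has_integral (?v t i - va i)) {a..t}"
  proof (cases "t < u")
    case True
    have pos: "((\<lambda>s. v s i) has_integral (x t i - xa i)) {a..t}"
      and vel: "((\<lambda>s. cs_rhs \<Psi> N f x v i s) has_integral (v t i - va i)) {a..t}"
      using f \<open>t \<in> {a..T}\<close> \<open>i < N\<close> unfolding is_traj_def by blast+
    have "?x t = x t" and "?v t = v t"
      using True by auto
    then show ?thesis
      unfolding glue
      using has_integral_eq[OF _ pos, of "\<lambda>s. if s < u then v s i else w s i"]
        has_integral_eq[OF _ vel, of "\<lambda>s. if s < u then cs_rhs \<Psi> N f x v i s else cs_rhs \<Psi> N g y w i s"]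
        True by auto
  next
    case False
    then have "u \<in> {a..T}" and "t \<in> {u..T}" and "u \<le> t"
      using \<open>t \<in> {a..T}\<close> \<open>a \<le> u\<close> \<open>u \<le> T\<close> by auto
    have pos1: "((\<lambda>s. v s i) has_integral (x u i - xa i)) {a..u}"
      and vel1: "((\<lambda>s. cs_rhs \<Psi> N f x v i s) has_integral (v u i - va i)) {a..u}"
      using f \<open>u \<in> {a..T}\<close> \<open>i < N\<close> unfolding is_traj_def by blast+
    have pos2: "((\<lambda>s. w s i) has_integral (y t i - x u i)) {u..t}"
      and vel2: "((\<lambda>s. cs_rhs \<Psi> N g y w i s) has_integral (w t i - v u i)) {u..t}"
      using g \<open>t \<in> {u..T}\<close> \<open>i < N\<close> unfolding is_traj_def by blast+
    show ?thesis
      using has_integral_glue[OF pos1 pos2 \<open>a \<le> u\<close> \<open>u \<le> t\<close>]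
        has_integral_glue[OF vel1 vel2 \<open>a \<le> u\<close> \<open>u \<le> t\<close>] False
      unfolding glue by simp
  qed
qed

lemma admissible_append:
  assumes "admissible CB a T f" and "admissible CB a T g"
  shows "admissible CB a T (\<lambda>t. if t < u then f t else g t)"
  unfolding admissible_def
proof (intro conjI allI)
  fix z
  have "(\<lambda>t. f t z) \<in> borel_measurable (lebesgue_on {a..T})"
    and "(\<lambda>t. g t z) \<in> borel_measurable (lebesgue_on {a..T})"
    using assms unfolding admissible_def by blast+
  then have "(\<lambda>t. if t \<in> {..<u} then f t z else g t z) \<in> borel_measurable (lebesgue_on {a..T})"
    by (intro measurable_If_set) (auto simp: sets_restrict_space_iff)
  moreover have "(\<lambda>t. (if t < u then f t else g t) z) = (\<lambda>t. if t \<in> {..<u} then f t z else g t z)"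
    by auto
  ultimately show "(\<lambda>t. (if t < u then f t else g t) z) \<in> borel_measurable (lebesgue_on {a..T})"
    by simp
next
  have "AE t in lebesgue_on {a..T}. \<exists>L. L-lipschitz_on UNIV (f t) \<and> norm (f t 0) + L \<le> CB"
    and "AE t in lebesgue_on {a..T}. \<exists>L. L-lipschitz_on UNIV (g t) \<and> norm (g t 0) + L \<le> CB"
    using assms unfolding admissible_def by blast+
  then show "AE t in lebesgue_on {a..T}. \<exists>L. L-lipschitz_on UNIV (if t < u then f t else g t) \<and>
               norm ((if t < u then f t else g t) 0) + L \<le> CB"
    by eventually_elim auto
qed

lemma optimal_imp_tail_cost_le:
  assumes opt: "optimal \<Psi> N lam a T vbar CB xa va f x v" and "a \<le> u" and "u \<le> T"
    and adm: "admissible CB a T g" and traj: "is_traj \<Psi> N u T g (x u) (v u) y w"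
    and f_int: "running_cost N lam vbar f x v integrable_on {a..T}"
    and g_int: "running_cost N lam vbar g y w integrable_on {u..T}"
  shows "cost N lam u T vbar f x v \<le> cost N lam u T vbar g y w"
proof -
  let ?h = "\<lambda>t. if t < u then f t else g t"
  let ?x = "\<lambda>t. if t < u then x t else y t" and ?v = "\<lambda>t. if t < u then v t else w t"
  let ?c = "\<lambda>a b f x v. integral {a..b} (running_cost N lam vbar f x v)"
  have f: "admissible CB a T f" and f_traj: "is_traj \<Psi> N a T f xa va x v"
    and best: "\<And>g y w. admissible CB a T g \<Longrightarrow> is_traj \<Psi> N a T g xa va y w \<Longrightarrow>
                 cost N lam a T vbar f x v \<le> cost N lam a T vbar g y w"
    using opt unfolding optimal_def by blast+
  have "?c a T f x v \<le> ?c a T ?h ?x ?v"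
    using best[OF admissible_append[OF f adm] is_traj_append[OF f_traj traj \<open>a \<le> u\<close> \<open>u \<le> T\<close>]]
    unfolding cost_eq_integral_running_cost .
  moreover have "?c a T f x v = ?c a u f x v + ?c u T f x v"
    using f_int \<open>a \<le> u\<close> \<open>u \<le> T\<close> by (simp add: Henstock_Kurzweil_Integration.integral_combine)
  moreover have glue: "running_cost N lam vbar ?h ?x ?v
                   = (\<lambda>s. if s < u then running_cost N lam vbar f x v s else running_cost N lam vbar g y w s)"
    by (auto simp: running_cost_def)
  have "?c a T ?h ?x ?v = ?c a u f x v + ?c u T g y w"
    unfolding glue using g_int \<open>a \<le> u\<close> \<open>u \<le> T\<close>
    by (intro integral_unique has_integral_glue integrable_integral integrable_on_subinterval[OF f_int]) auto
  ultimately show ?thesis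
    unfolding cost_eq_integral_running_cost by simp
qed

lemma optimal_tail_cost_le:
  fixes \<Psi> :: "'a::euclidean_space \<Rightarrow> 'a \<Rightarrow> real"
  assumes sym: "\<And>y z. \<Psi> y z = \<Psi> z y" and nonneg: "\<And>y z. 0 \<le> \<Psi> y z"
    and bound: "\<And>y z. \<Psi> y z \<le> C\<Psi>" and lip: "L-lipschitz_on UNIV (\<lambda>(y, z). \<Psi> y z)"
    and "lam > 0" and "CB \<ge> (1 + norm vbar) / sqrt lam"
    and opt: "optimal \<Psi> N lam a T vbar CB xa va f x v" and "a \<le> t1" and "t1 \<le> T"
  shows "cost N lam t1 T vbar f x v \<le> sqrt lam * normN_sq N (\<lambda>i. v t1 i - vbar)"
proof -
  have \<Psi>: "continuous_on UNIV (\<lambda>(y, z). \<Psi> y z)"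
    using lip by (rule lipschitz_on_continuous_on)
  have f: "admissible CB a T f" and traj: "is_traj \<Psi> N a T f xa va x v"
    using opt unfolding optimal_def by blast+
  let ?g = "linear_feedback (1 / sqrt lam) vbar"
  have g: "admissible CB b T ?g" for b
    using assms(5,6) by (intro admissible_linear_feedback) (simp_all add: field_simps)
  have "0 \<le> 1 / sqrt lam"
    using \<open>lam > 0\<close> by simp
  then obtain y w where tail: "is_traj \<Psi> N t1 T ?g (x t1) (v t1) y w"
    using linear_feedback_traj_exists[OF sym nonneg bound lip _ \<open>t1 \<le> T\<close>] by blast
  have "a \<le> T"
    using \<open>a \<le> t1\<close> \<open>t1 \<le> T\<close> by simp
  have "cost N lam t1 T vbar f x v \<le> cost N lam t1 T vbar ?g y w"
    using running_cost_integrable[OF \<Psi> f traj \<open>a \<le> T\<close>] running_cost_integrable[OF \<Psi> g tail \<open>t1 \<le> T\<close>]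
    by (rule optimal_imp_tail_cost_le[OF opt \<open>a \<le> t1\<close> \<open>t1 \<le> T\<close> g tail])
  also have "\<dots> \<le> sqrt lam * normN_sq N (\<lambda>i. v t1 i - vbar)"
    by (rule linear_feedback_cost_le[OF sym nonneg \<Psi> \<open>lam > 0\<close> \<open>t1 \<le> T\<close> tail])
  finally show ?thesis .
qed


theorem lemma4p2:
  fixes \<Psi> :: "'a::euclidean_space \<Rightarrow> 'a \<Rightarrow> real"
    and N :: nat and T lam C\<Psi> CB :: real and vbar :: 'a
    and x0 v0 :: "nat \<Rightarrow> 'a"
    and f :: "real \<Rightarrow> ('a \<times> 'a) \<Rightarrow> 'a" and x v :: "real \<Rightarrow> nat \<Rightarrow> 'a"
  assumes "N \<ge> 1" and "T > 0" and "lam > 0"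
    and "\<exists>L. L-lipschitz_on UNIV (\<lambda>(y, z). \<Psi> y z)"
    and "\<And>y z. \<Psi> y z = \<Psi> z y"
    and "\<And>y z. 0 \<le> \<Psi> y z" and "\<And>y z. \<Psi> y z \<le> C\<Psi>"
    and "CB \<ge> (1 + norm vbar) / sqrt lam"
    and "optimal \<Psi> N lam 0 T vbar CB x0 v0 f x v"
    and "0 \<le> t1" and "t1 \<le> t2" and "t2 \<le> T"
  shows "normN_sq N (\<lambda>i. v t2 i - vbar)
           \<le> (if lam \<le> 1 then 1 + 1 / sqrt lam else 1 + sqrt lam)
              * normN_sq N (\<lambda>i. v t1 i - vbar)"
proof -
  note sym = assms(5) and nonneg = assms(6) and opt = assms(9)
  obtain L where lip: "L-lipschitz_on UNIV (\<lambda>(y, z). \<Psi> y z)"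
    using assms(4) by blast
  have f: "admissible CB 0 T f" and traj: "is_traj \<Psi> N 0 T f x0 v0 x v"
    using opt unfolding optimal_def by blast+
  have "0 < sqrt lam" and "t1 \<le> T"
    using assms(3,11,12) by auto
  let ?e = "\<lambda>t. normN_sq N (\<lambda>i. v t i - vbar)" and ?I = "integral {t1..t2} (running_cost N lam vbar f x v)"
  have "?I \<le> cost N lam t1 T vbar f x v"
    unfolding cost_eq_integral_running_cost using assms(2,3,10-12)
    by (intro integral_subset_le integrable_on_subinterval[OF running_cost_integrable[OF
          lipschitz_on_continuous_on[OF lip] f traj]] running_cost_nonneg ballI) auto
  also have "\<dots> \<le> sqrt lam * ?e t1"
    by (rule optimal_tail_cost_le[OF sym nonneg assms(7) lip assms(3,8) opt assms(10) \<open>t1 \<le> T\<close>])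
  finally have "?I / sqrt lam \<le> ?e t1"
    using \<open>0 < sqrt lam\<close> by (simp add: pos_divide_le_eq mult.commute)
  moreover have "?e t2 - ?e t1 \<le> ?I / sqrt lam"
    using lipschitz_on_continuous_on[OF lip] assms(3) f traj assms(10-12)
    by (rule normN_sq_increment_le_running_cost[OF sym nonneg])
  ultimately have "?e t2 \<le> 2 * ?e t1"
    by linarith
  also have "\<dots> \<le> (if lam \<le> 1 then 1 + 1 / sqrt lam else 1 + sqrt lam) * ?e t1"
    using \<open>0 < sqrt lam\<close> by (intro mult_right_mono) (simp_all add: le_divide_eq normN_sq_def sum_nonneg)
  finally show ?thesis .
qed

end
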